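(* Let $\theta\in\mathbb R$. If $\theta\neq\underline\theta$, then the maximizer of $\sup_{Y\in\mathcal Y}\mathbb E[F(Y;\theta)]$ is unique up to a $\mathbb P$-null set: if $Y_1^*,Y_2^*\in\arg\max_{Y\in\mathcal Y}\mathbb E[F(Y;\theta)]$ then $\mathbb P(Y_1^*=Y_2^* )=1$. If $\theta=\underline\theta$ and $k>0$, then $Y^*\in\mathcal Y$ is a maximizer of $\mathbb E[F(Y;\underline\theta)]$ over $\mathcal Y$ if and only if $\mathbb P\big(Y^*\in\{0,\gamma(1+k^{-1/(1-\alpha)})\}\big)=1$.
   Context: Let $B$ be a one-dimensional standard Brownian motion on a complete probability space $(\Omega,\mathcal F,\mathbb P)$ with augmented natural filtration $(\mathcal F_t)$. Constants $\mu,r\in\mathbb R$, $\sigma>0$, $\phi:=(\mu-r)/\sigma\neq0$; pricing kernel $Z_t=\exp(-\phi B_t-(r+\phi^2/2)t)$. Fix $\tau>0$, $\alpha\in(0,1)$, $k\ge0$, $\gamma>0$. $U(x)=x^\alpha$ for $x\ge0$, $U(x)=-k|x|^\alpha$ for $x<0$. $\mathcal Y$ is the set of $\mathcal F_\tau$-measurable random variables $Y\ge0$ with $\mathbb E[Z_\tau Y]\le1$. $F(y;\theta):=U(y-\gamma)+\theta y^\alpha$ for $y\ge0,\theta\in\mathbb R$, and $\underline\theta:=-(1+k^{1/(1-\alpha)})^{1-\alpha}$. *)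

theory Defs
  imports "HOL-Probability.Probability"
begin

definition brownian_motion :: "'a measure \<Rightarrow> (real \<Rightarrow> 'a \<Rightarrow> real) \<Rightarrow> bool" where
  "brownian_motion M B \<longleftrightarrow>
     prob_space M \<and>
     (\<forall>t. B t \<in> borel_measurable M) \<and>
     (AE \<omega> in M. B 0 \<omega> = 0) \<and>
     (AE \<omega> in M. continuous_on {0..} (\<lambda>t. B t \<omega>)) \<and>
     (\<forall>s t. 0 \<le> s \<and> s < t \<longrightarrow>
        distributed M lborel (\<lambda>\<omega>. B t \<omega> - B s \<omega>) (normal_density 0 (sqrt (t - s)))) \<and>
     (\<forall>(ts :: nat \<Rightarrow> real) n. 0 \<le> ts 0 \<and> (\<forall>i<n. ts i < ts (Suc i)) \<longrightarrow>
        prob_space.indep_vars M (\<lambda>_. borel) (\<lambda>i \<omega>. B (ts (Suc i)) \<omega> - B (ts i) \<omega>) {..<n})"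

definition augmented_filtration :: "'a measure \<Rightarrow> (real \<Rightarrow> 'a \<Rightarrow> real) \<Rightarrow> real \<Rightarrow> 'a measure" where
  "augmented_filtration M B t =
     sigma (space M)
       ({B s -` A \<inter> space M | s A. 0 \<le> s \<and> s \<le> t \<and> A \<in> sets borel} \<union> null_sets M)"

definition mpr :: "real \<Rightarrow> real \<Rightarrow> real \<Rightarrow> real" where
  "mpr \<mu> r \<sigma> = (\<mu> - r) / \<sigma>"

definition pricing_kernel ::
  "real \<Rightarrow> real \<Rightarrow> real \<Rightarrow> (real \<Rightarrow> 'a \<Rightarrow> real) \<Rightarrow> real \<Rightarrow> 'a \<Rightarrow> real" where
  "pricing_kernel \<mu> r \<sigma> B t \<omega> =
     exp (- mpr \<mu> r \<sigma> * B t \<omega> - (r + (mpr \<mu> r \<sigma>)\<^sup>2 / 2) * t)"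

definition admissible ::
  "'a measure \<Rightarrow> (real \<Rightarrow> 'a \<Rightarrow> real) \<Rightarrow> real \<Rightarrow> real \<Rightarrow> real \<Rightarrow> real \<Rightarrow> ('a \<Rightarrow> real) set" where
  "admissible M B \<mu> r \<sigma> \<tau> =
     {Y. Y \<in> borel_measurable (augmented_filtration M B \<tau>) \<and>
         (\<forall>\<omega>\<in>space M. 0 \<le> Y \<omega>) \<and>
         (\<integral>\<^sup>+\<omega>. ennreal (pricing_kernel \<mu> r \<sigma> B \<tau> \<omega> * Y \<omega>) \<partial>M) \<le> 1}"

definition U :: "real \<Rightarrow> real \<Rightarrow> real \<Rightarrow> real" where
  "U \<alpha> k x = (if 0 \<le> x then x powr \<alpha> else - k * \<bar>x\<bar> powr \<alpha>)"

definition Fobj :: "real \<Rightarrow> real \<Rightarrow> real \<Rightarrow> real \<Rightarrow> real \<Rightarrow> real" where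
  "Fobj \<alpha> k \<gamma> \<theta> y = U \<alpha> k (y - \<gamma>) + \<theta> * y powr \<alpha>"

definition lower_theta :: "real \<Rightarrow> real \<Rightarrow> real" where
  "lower_theta \<alpha> k = - ((1 + k powr (1 / (1 - \<alpha>))) powr (1 - \<alpha>))"

definition ext_expectation :: "'a measure \<Rightarrow> ('a \<Rightarrow> real) \<Rightarrow> ereal" where
  "ext_expectation M X =
     enn2ereal (\<integral>\<^sup>+\<omega>. ennreal (X \<omega>) \<partial>M) - enn2ereal (\<integral>\<^sup>+\<omega>. ennreal (- X \<omega>) \<partial>M)"

definition is_maximizer ::
  "'a measure \<Rightarrow> (real \<Rightarrow> 'a \<Rightarrow> real) \<Rightarrow> real \<Rightarrow> real \<Rightarrow> real \<Rightarrow> real \<Rightarrow>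
   real \<Rightarrow> real \<Rightarrow> real \<Rightarrow> real \<Rightarrow> ('a \<Rightarrow> real) \<Rightarrow> bool" where
  "is_maximizer M B \<mu> r \<sigma> \<tau> \<alpha> k \<gamma> \<theta> Y \<longleftrightarrow>
     Y \<in> admissible M B \<mu> r \<sigma> \<tau> \<and>
     (\<forall>Y' \<in> admissible M B \<mu> r \<sigma> \<tau>.
        ext_expectation M (\<lambda>\<omega>. Fobj \<alpha> k \<gamma> \<theta> (Y' \<omega>))
          \<le> ext_expectation M (\<lambda>\<omega>. Fobj \<alpha> k \<gamma> \<theta> (Y \<omega>)))"

end

(*
  The argument is pointwise Lagrangian duality.  For a multiplier l >= 0 the problem splits
  into the scalar problems  max_{y >= 0} F(y) - z y  at z = l Z.  Their maximiser sets are
  antitone in z, hence single-valued outside a countable set of jump points.  Continuity of the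
  budget map  l |-> E[Z yhat(l Z)]  and the intermediate value theorem produce a multiplier that
  either exhausts the budget or is zero, and every maximiser of E[F(Y)] then solves the scalar
  problem at l Z almost surely.  Since Z is lognormal it has no atoms, which gives uniqueness
  when l > 0; when l = 0 uniqueness follows from the first-order condition of F unless theta is
  the critical level lower_theta.  At that level F attains its maximum -k gamma^alpha exactly at
  0 and at gamma (1 + k^(-1/(1-alpha))), the equality case of Hoelder's inequality, so the
  maximisers are the admissible Y concentrated on these two points.
*)
theory Submission
  imports Defs
begin

section \<open>Elementary inequalities\<close>

lemma weighted_AM_GM:
  fixes \<alpha> x c :: real
  assumes "0 \<le> \<alpha>" "\<alpha> \<le> 1" "0 \<le> x" "0 \<le> c"
  shows "x powr \<alpha> * c powr (1 - \<alpha>) \<le> \<alpha> * x + (1 - \<alpha>) * c"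
proof (cases "x = 0 \<or> c = 0")
  case True
  then show ?thesis using assms by auto
next
  case False
  then show ?thesis using assms Youngs_inequality_0[of \<alpha> "1 - \<alpha>" x c] by auto
qed

lemma weighted_AM_GM_strict:
  fixes \<alpha> x c :: real
  assumes "0 < \<alpha>" "\<alpha> < 1" "0 \<le> x" "0 < c" "x \<noteq> c"
  shows "x powr \<alpha> * c powr (1 - \<alpha>) < \<alpha> * x + (1 - \<alpha>) * c"
proof -
  \<comment> \<open>apply the non-strict inequality to the square roots; squaring then loses exactly
      \<open>\<alpha> (1 - \<alpha>) (sqrt x - sqrt c)\<^sup>2 > 0\<close>\<close>
  define u v where "u = sqrt x" and "v = sqrt c"
  have uv: "0 \<le> u" "0 < v" "u \<noteq> v" "x = u\<^sup>2" "c = v\<^sup>2"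
    using assms by (auto simp: u_def v_def)
  have "x powr \<alpha> * c powr (1 - \<alpha>) = (u powr \<alpha> * v powr (1 - \<alpha>))\<^sup>2"
    using uv by (simp add: power2_eq_square powr_mult mult_ac)
  also have "\<dots> \<le> (\<alpha> * u + (1 - \<alpha>) * v)\<^sup>2"
    using weighted_AM_GM[of \<alpha> u v] assms uv by (intro power_mono) auto
  also have "\<dots> < \<alpha> * x + (1 - \<alpha>) * c"
  proof -
    have "0 < \<alpha> * (1 - \<alpha>) * (u - v)\<^sup>2" using assms uv by simp
    then show ?thesis unfolding uv(4,5) by (simp add: power2_eq_square algebra_simps)
  qed
  finally show ?thesis .
qed

lemma Hoelder_two_terms_normalised:
  fixes \<alpha> a b c d :: real
  assumes "0 < \<alpha>" "\<alpha> < 1" "0 \<le> a" "0 \<le> b" "0 \<le> c" "0 \<le> d" "a + b = 1" "c + d = 1"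
  shows "a powr \<alpha> * c powr (1 - \<alpha>) + b powr \<alpha> * d powr (1 - \<alpha>) \<le> 1"
    and "0 < c \<Longrightarrow> a \<noteq> c \<Longrightarrow> a powr \<alpha> * c powr (1 - \<alpha>) + b powr \<alpha> * d powr (1 - \<alpha>) < 1"
proof -
  have sum: "\<alpha> * a + (1 - \<alpha>) * c + (\<alpha> * b + (1 - \<alpha>) * d) = 1"
    using assms by (simp add: algebra_simps flip: distrib_left)
  have "a powr \<alpha> * c powr (1 - \<alpha>) \<le> \<alpha> * a + (1 - \<alpha>) * c"
    and second: "b powr \<alpha> * d powr (1 - \<alpha>) \<le> \<alpha> * b + (1 - \<alpha>) * d"
    using assms by (intro weighted_AM_GM; simp)+
  then show "a powr \<alpha> * c powr (1 - \<alpha>) + b powr \<alpha> * d powr (1 - \<alpha>) \<le> 1" using sum by linarith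
  assume "0 < c" "a \<noteq> c"
  then have "a powr \<alpha> * c powr (1 - \<alpha>) < \<alpha> * a + (1 - \<alpha>) * c"
    using assms by (intro weighted_AM_GM_strict) auto
  then show "a powr \<alpha> * c powr (1 - \<alpha>) + b powr \<alpha> * d powr (1 - \<alpha>) < 1" using sum second by linarith
qed

lemma Hoelder_two_terms:
  fixes \<alpha> a b c d :: real
  assumes \<alpha>: "0 < \<alpha>" "\<alpha> < 1" and nonneg: "0 \<le> a" "0 \<le> b" "0 \<le> c" "0 \<le> d"
  shows "a powr \<alpha> * c powr (1 - \<alpha>) + b powr \<alpha> * d powr (1 - \<alpha>)
           \<le> (a + b) powr \<alpha> * (c + d) powr (1 - \<alpha>)"
    and "0 < c \<Longrightarrow> a * d \<noteq> b * c \<Longrightarrow>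
         a powr \<alpha> * c powr (1 - \<alpha>) + b powr \<alpha> * d powr (1 - \<alpha>)
           < (a + b) powr \<alpha> * (c + d) powr (1 - \<alpha>)"
proof -
  let ?lhs = "a powr \<alpha> * c powr (1 - \<alpha>) + b powr \<alpha> * d powr (1 - \<alpha>)"
  let ?rhs = "(a + b) powr \<alpha> * (c + d) powr (1 - \<alpha>)"
  define s t where "s = a + b" and "t = c + d"
  have scale: "?lhs = ?rhs * ((a / s) powr \<alpha> * (c / t) powr (1 - \<alpha>) + (b / s) powr \<alpha> * (d / t) powr (1 - \<alpha>))"
    if "0 < s" "0 < t"
  proof -
    have "?rhs \<noteq> 0" using that by (simp add: s_def t_def)
    then show ?thesis
      using that nonneg by (simp add: s_def t_def powr_divide add_divide_distrib distrib_left)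
  qed
  note normalised = Hoelder_two_terms_normalised[OF \<alpha>, of "a / s" "b / s" "c / t" "d / t"]
  have sums: "a / s + b / s = 1" "c / t + d / t = 1" if "0 < s" "0 < t"
    using that by (simp_all add: s_def t_def flip: add_divide_distrib)
  show "?lhs \<le> ?rhs"
  proof (cases "0 < s \<and> 0 < t")
    case True
    then show ?thesis
      using scale normalised(1) sums nonneg by (simp add: mult_le_cancel_left1 s_def t_def)
  next
    case False
    then have "a = 0 \<and> b = 0 \<or> c = 0 \<and> d = 0" using nonneg by (auto simp: s_def t_def)
    then show ?thesis using \<alpha> by auto
  qed
  assume c: "0 < c" and ne: "a * d \<noteq> b * c"
  then have "a \<noteq> 0 \<or> b \<noteq> 0" by auto
  then have st: "0 < s" "0 < t" using nonneg c by (auto simp: s_def t_def add_pos_nonneg add_nonneg_pos)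
  moreover have "a / s \<noteq> c / t" using st ne by (simp add: s_def t_def field_simps)
  ultimately show "?lhs < ?rhs"
    using scale normalised(2) sums nonneg c by (simp add: mult_less_cancel_left1 s_def t_def)
qed

lemma powr_add_le_add_powr:
  fixes \<alpha> a b :: real
  assumes "0 \<le> \<alpha>" "\<alpha> \<le> 1" "0 \<le> a" "0 \<le> b"
  shows "(a + b) powr \<alpha> \<le> a powr \<alpha> + b powr \<alpha>"
proof (cases "a = 0 \<or> b = 0")
  case True
  then show ?thesis using assms by auto
next
  case False
  then have ab: "0 < a" "0 < b" using assms by auto
  have "(a + b) powr \<alpha> = (a + b) * (a + b) powr (\<alpha> - 1)"
    using ab by (simp add: powr_diff)
  also have "\<dots> = a * (a + b) powr (\<alpha> - 1) + b * (a + b) powr (\<alpha> - 1)"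
    by (simp add: distrib_right)
  also have "\<dots> \<le> a * a powr (\<alpha> - 1) + b * b powr (\<alpha> - 1)"
    using ab assms by (intro add_mono mult_left_mono powr_mono2') auto
  also have "\<dots> = a powr \<alpha> + b powr \<alpha>" using ab by (simp add: powr_diff)
  finally show ?thesis .
qed

lemma powr_le_linear_plus_const:
  fixes \<alpha> b e u :: real
  assumes "0 < \<alpha>" "\<alpha> < 1" "0 \<le> b" "0 < e" "0 \<le> u"
  shows "b * u powr \<alpha> \<le> e * u + b powr (1 / (1 - \<alpha>)) * e powr (- \<alpha> / (1 - \<alpha>))"
proof (cases "b = 0 \<or> u = 0")
  case True
  then show ?thesis using assms by auto
next
  case False
  define c where "c = b powr (1 / (1 - \<alpha>)) * e powr (- \<alpha> / (1 - \<alpha>))"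
  have "c powr (1 - \<alpha>) = b * e powr (- \<alpha>)"
    unfolding c_def using assms False by (simp add: powr_mult powr_powr)
  then have "b * u powr \<alpha> = (e * u) powr \<alpha> * c powr (1 - \<alpha>)"
    using assms by (simp add: powr_mult powr_minus field_simps)
  also have "\<dots> \<le> \<alpha> * (e * u) + (1 - \<alpha>) * c"
    using assms by (intro weighted_AM_GM) (auto simp: c_def)
  also have "\<dots> \<le> e * u + c"
    using assms by (intro add_mono mult_left_le_one_le) (auto simp: c_def)
  finally show ?thesis unfolding c_def .
qed

section \<open>Maximisers of \<open>f y - z y\<close> over \<open>y \<ge> 0\<close>\<close>

text \<open>The scalar problem obtained by pricing the claim at the state price \<open>z\<close>.\<close>

definition conj_argmax :: "(real \<Rightarrow> real) \<Rightarrow> real \<Rightarrow> real set" where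
  "conj_argmax f z = {y. 0 \<le> y \<and> (\<forall>u\<ge>0. f u - z * u \<le> f y - z * y)}"

definition conj_argmax_jumps :: "(real \<Rightarrow> real) \<Rightarrow> real set" where
  "conj_argmax_jumps f =
     {z. 0 < z \<and> (\<exists>y1\<in>conj_argmax f z. \<exists>y2\<in>conj_argmax f z. y1 < y2)}"

lemma conj_argmax_nonneg: "y \<in> conj_argmax f z \<Longrightarrow> 0 \<le> y"
  by (simp add: conj_argmax_def)

lemma conj_argmax_le: "y \<in> conj_argmax f z \<Longrightarrow> 0 \<le> u \<Longrightarrow> f u - z * u \<le> f y - z * y"
  by (simp add: conj_argmax_def)

lemma conj_argmax_antimono:
  assumes "z1 < z2" "y1 \<in> conj_argmax f z1" "y2 \<in> conj_argmax f z2"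
  shows "y2 \<le> y1"
proof -
  have "f y2 - z1 * y2 \<le> f y1 - z1 * y1" "f y1 - z2 * y1 \<le> f y2 - z2 * y2"
    using assms by (auto intro: conj_argmax_le conj_argmax_nonneg)
  then have "0 \<le> (z2 - z1) * (y1 - y2)" by (simp add: algebra_simps)
  then show ?thesis using assms(1) by (simp add: zero_le_mult_iff)
qed

lemma conj_argmax_unique:
  assumes "z \<notin> conj_argmax_jumps f" "0 < z" "y1 \<in> conj_argmax f z" "y2 \<in> conj_argmax f z"
  shows "y1 = y2"
  using assms unfolding conj_argmax_jumps_def by (metis (mono_tags, lifting) linorder_neqE mem_Collect_eq)

lemma conj_argmax_closed_graph:
  assumes f: "continuous_on {0..} f" and F: "F \<noteq> bot"
    and ys: "(ys \<longlongrightarrow> y) F" and zs: "(zs \<longlongrightarrow> z) F"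
    and ev: "\<forall>\<^sub>F x in F. ys x \<in> conj_argmax f (zs x)"
  shows "y \<in> conj_argmax f z"
proof -
  have ev_nonneg: "\<forall>\<^sub>F x in F. ys x \<in> {0..}"
    using ev by eventually_elim (simp add: conj_argmax_nonneg)
  then have "0 \<le> y" using tendsto_lowerbound[OF ys _ F] by (simp add: eventually_mono)
  moreover have "f u - z * u \<le> f y - z * y" if "0 \<le> u" for u
  proof (rule tendsto_le[OF F])
    have "((\<lambda>x. f (ys x)) \<longlongrightarrow> f y) F"
      using continuous_on_tendsto_compose[OF f ys] \<open>0 \<le> y\<close> ev_nonneg by simp
    then show "((\<lambda>x. f (ys x) - zs x * ys x) \<longlongrightarrow> f y - z * y) F"
      by (intro tendsto_intros ys zs)
    show "((\<lambda>x. f u - zs x * u) \<longlongrightarrow> f u - z * u) F" by (intro tendsto_intros zs)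
    show "\<forall>\<^sub>F x in F. f u - zs x * u \<le> f (ys x) - zs x * ys x"
      using ev by eventually_elim (use that in \<open>simp add: conj_argmax_le\<close>)
  qed
  ultimately show ?thesis by (simp add: conj_argmax_def)
qed

lemma countable_conj_argmax_jumps: "countable (conj_argmax_jumps f)"
proof -
  \<comment> \<open>by antitonicity the gaps between two maximisers at distinct jump points are disjoint,
      so a rational in each gap injects the jump points into \<open>\<rat>\<close>\<close>
  define gap where "gap z r \<longleftrightarrow> r \<in> \<rat> \<and> (\<exists>y1\<in>conj_argmax f z. \<exists>y2\<in>conj_argmax f z. y1 < r \<and> r < y2)"
    for z r
  define q where "q z = (SOME r. gap z r)" for z
  have gap_q: "gap z (q z)" if jump: "z \<in> conj_argmax_jumps f" for z
  proof -
    obtain y1 y2 where "y1 \<in> conj_argmax f z" "y2 \<in> conj_argmax f z" "y1 < y2"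
      using jump unfolding conj_argmax_jumps_def by blast
    moreover obtain r where "r \<in> \<rat>" "y1 < r" "r < y2" using Rats_dense_in_real[OF \<open>y1 < y2\<close>] by blast
    ultimately have "\<exists>r. gap z r" unfolding gap_def by blast
    then show ?thesis unfolding q_def by (rule someI_ex)
  qed
  have q_less: "q z2 < q z1"
    if jumps: "z1 \<in> conj_argmax_jumps f" "z2 \<in> conj_argmax_jumps f" and "z1 < z2" for z1 z2
  proof -
    obtain a1 where "a1 \<in> conj_argmax f z1" "a1 < q z1" using gap_q[OF jumps(1)] by (auto simp: gap_def)
    moreover obtain b2 where "b2 \<in> conj_argmax f z2" "q z2 < b2" using gap_q[OF jumps(2)] by (auto simp: gap_def)
    ultimately show ?thesis using conj_argmax_antimono[OF \<open>z1 < z2\<close>] by fastforce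
  qed
  have "inj_on q (conj_argmax_jumps f)"
    by (rule inj_onI) (metis linorder_neqE less_irrefl q_less)
  moreover have "q ` conj_argmax_jumps f \<subseteq> \<rat>" using gap_q by (auto simp: gap_def)
  ultimately show ?thesis
    using countable_rat countable_subset countable_image_inj_on by metis
qed

text \<open>A choice of maximiser; only \<open>z > 0\<close> matters, where maximisers exist under \<open>powr_growth\<close>.\<close>

definition conj_argmax_sel :: "(real \<Rightarrow> real) \<Rightarrow> real \<Rightarrow> real" where
  "conj_argmax_sel f z = (if 0 < z then SOME y. y \<in> conj_argmax f z else 0)"

locale powr_growth =
  fixes f :: "real \<Rightarrow> real" and \<alpha> b :: real
  assumes cont: "continuous_on {0..} f"
    and exponent: "0 < \<alpha>" "\<alpha> < 1"
    and coeff: "0 \<le> b"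
    and growth: "\<And>y. 0 \<le> y \<Longrightarrow> f y \<le> b * y powr \<alpha>"
begin

definition argmax_bound :: "real \<Rightarrow> real" where
  "argmax_bound z = 2 * (- f 0) + 2 * b powr (1 / (1 - \<alpha>)) * (z / 2) powr (- \<alpha> / (1 - \<alpha>))"

lemma argmax_bound_antimono: "0 < z1 \<Longrightarrow> z1 \<le> z2 \<Longrightarrow> argmax_bound z2 \<le> argmax_bound z1"
  unfolding argmax_bound_def using exponent
  by (intro add_left_mono mult_left_mono powr_mono2') (auto simp: divide_nonpos_pos)

lemma objective_le_argmax_bound:
  assumes "0 < z" "0 \<le> y"
  shows "2 * (f y - z * y) \<le> 2 * f 0 + argmax_bound z - z * y"
  using powr_le_linear_plus_const[of \<alpha> b "z / 2" y] growth[of y] assms exponent coeff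
  unfolding argmax_bound_def by (simp add: field_simps)

lemma conj_argmax_mult_le:
  assumes "0 < z" "y \<in> conj_argmax f z"
  shows "z * y \<le> argmax_bound z"
proof -
  have "f 0 \<le> f y - z * y" using conj_argmax_le[OF assms(2), of 0] by simp
  then show ?thesis
    using objective_le_argmax_bound[OF assms(1) conj_argmax_nonneg[OF assms(2)]] by argo
qed

lemma conj_argmax_nonempty:
  assumes z: "0 < z"
  shows "conj_argmax f z \<noteq> {}"
proof -
  \<comment> \<open>beyond \<open>R\<close> the objective is below its value at \<open>0\<close>, so a maximiser over \<open>[0, R]\<close> will do\<close>
  define R where "R = max 0 (argmax_bound z / z)"
  have "continuous_on {0..R} (\<lambda>u. f u - z * u)"
    using continuous_on_subset[OF cont] by (intro continuous_intros) auto
  then obtain y where y: "y \<in> {0..R}" and max: "\<And>u. u \<in> {0..R} \<Longrightarrow> f u - z * u \<le> f y - z * y"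
    using continuous_attains_sup[of "{0..R}" "\<lambda>u. f u - z * u"] by (auto simp: R_def)
  have "f u - z * u \<le> f y - z * y" if u: "0 \<le> u" for u
  proof (cases "u \<le> R")
    case True
    then show ?thesis using max u by simp
  next
    case False
    have "argmax_bound z / z < u" using False by (simp add: R_def)
    then have "argmax_bound z < z * u" using z by (simp add: pos_divide_less_eq mult.commute)
    then have "f u - z * u \<le> f 0"
      using objective_le_argmax_bound[OF z u] by argo
    also have "\<dots> = f 0 - z * 0" by simp
    also have "\<dots> \<le> f y - z * y" using max[of 0] y by simp
    finally show ?thesis .
  qed
  then show ?thesis using y by (auto simp: conj_argmax_def)
qed

abbreviation sel :: "real \<Rightarrow> real" where
  "sel \<equiv> conj_argmax_sel f"

lemma sel_in: "0 < z \<Longrightarrow> sel z \<in> conj_argmax f z"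
  unfolding conj_argmax_sel_def using conj_argmax_nonempty by (simp add: some_in_eq)

lemma sel_nonneg: "0 \<le> sel z"
  using sel_in[of z] conj_argmax_nonneg by (cases "0 < z") (auto simp: conj_argmax_sel_def)

lemma sel_antimono: "0 < z1 \<Longrightarrow> z1 \<le> z2 \<Longrightarrow> sel z2 \<le> sel z1"
  using conj_argmax_antimono[of z1 z2 "sel z1" f "sel z2"] sel_in[of z1] sel_in[of z2]
  by (cases "z1 = z2") auto

lemma sel_mult_le: "0 < z \<Longrightarrow> z * sel z \<le> argmax_bound z"
  using conj_argmax_mult_le sel_in by blast

lemma borel_measurable_sel [measurable]: "sel \<in> borel_measurable borel"
proof -
  have "(\<lambda>z. - sel z) \<in> borel_measurable borel"
  proof (rule borel_measurable_piecewise_mono[of "{{..0}, {0<..}}"])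
    fix c :: "real set" assume "c \<in> {{..0}, {0<..}}"
    then show "mono_on c (\<lambda>z. - sel z)"
      using sel_antimono by (auto intro!: mono_onI simp: conj_argmax_sel_def)
  qed auto
  then have "(\<lambda>z. - (- sel z)) \<in> borel_measurable borel" by measurable
  then show ?thesis by simp
qed

lemma sel_tendsto_at_right:
  assumes z: "0 \<le> z" and bounded: "\<And>x. z < x \<Longrightarrow> sel x \<le> K"
  shows "\<exists>L\<in>conj_argmax f z. (sel \<longlongrightarrow> L) (at_right z)"
proof -
  define L where "L = - Inf ((\<lambda>x. - sel x) ` ({z<..} \<inter> UNIV))"
  have "((\<lambda>x. - sel x) \<longlongrightarrow> - L) (at z within ({z<..} \<inter> UNIV))"
    unfolding L_def minus_minus
    by (rule Lim_right_bound[where K = "- K"]) (use sel_antimono z bounded in force)+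
  then have lim: "(sel \<longlongrightarrow> L) (at_right z)" using tendsto_minus by fastforce
  have "\<forall>\<^sub>F x in at_right z. sel x \<in> conj_argmax f x"
    using eventually_at_right_less[of z] by eventually_elim (use z sel_in in auto)
  then have "L \<in> conj_argmax f z"
    using conj_argmax_closed_graph[OF cont trivial_limit_at_right_real lim tendsto_ident_at] by blast
  with lim show ?thesis by blast
qed

lemma sel_tendsto_at_left:
  assumes z: "0 < z"
  shows "\<exists>L\<in>conj_argmax f z. (sel \<longlongrightarrow> L) (at_left z)"
proof -
  define L where "L = - Sup ((\<lambda>x. - sel x) ` ({..<z} \<inter> {0<..}))"
  have "((\<lambda>x. - sel x) \<longlongrightarrow> - L) (at z within ({..<z} \<inter> {0<..}))"
    unfolding L_def minus_minus
    by (rule Lim_left_bound[where K = "- sel z"]) (use sel_antimono in force)+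
  moreover have "at z within ({..<z} \<inter> {0<..}) = at_left z"
    using z by (intro at_within_nhd[of z "{0<..}"]) auto
  ultimately have lim: "(sel \<longlongrightarrow> L) (at_left z)" using tendsto_minus by fastforce
  have "\<forall>\<^sub>F x in at_left z. sel x \<in> conj_argmax f x"
    using eventually_at_left_real[OF z] by eventually_elim (use sel_in in auto)
  then have "L \<in> conj_argmax f z"
    using conj_argmax_closed_graph[OF cont trivial_limit_at_left_real lim tendsto_ident_at] by blast
  with lim show ?thesis by blast
qed

lemma isCont_sel:
  assumes z: "0 < z" and no_jump: "z \<notin> conj_argmax_jumps f"
  shows "isCont sel z"
proof -
  obtain L1 where "L1 \<in> conj_argmax f z" "(sel \<longlongrightarrow> L1) (at_right z)"
    using sel_tendsto_at_right[of z "sel z"] z sel_antimono by auto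
  moreover obtain L2 where "L2 \<in> conj_argmax f z" "(sel \<longlongrightarrow> L2) (at_left z)"
    using sel_tendsto_at_left[OF z] by blast
  ultimately have "(sel \<longlongrightarrow> sel z) (at_right z)" "(sel \<longlongrightarrow> sel z) (at_left z)"
    using conj_argmax_unique[OF no_jump z] sel_in[OF z] by metis+
  then show ?thesis unfolding isCont_def by (rule filterlim_split_at[rotated])
qed

end

section \<open>The objective \<open>F\<close>\<close>

lemma Fobj_zero: "0 < \<alpha> \<Longrightarrow> 0 < \<gamma> \<Longrightarrow> Fobj \<alpha> k \<gamma> \<theta> 0 = - (k * \<gamma> powr \<alpha>)"
  by (simp add: Fobj_def U_def)

lemma Fobj_theta_shift: "Fobj \<alpha> k \<gamma> \<theta> y = Fobj \<alpha> k \<gamma> \<theta>' y + (\<theta> - \<theta>') * y powr \<alpha>"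
  by (simp add: Fobj_def algebra_simps)

lemma Fobj_below_kink: "0 \<le> y \<Longrightarrow> y < \<gamma> \<Longrightarrow> Fobj \<alpha> k \<gamma> \<theta> y = \<theta> * y powr \<alpha> - k * (\<gamma> - y) powr \<alpha>"
  by (simp add: Fobj_def U_def)

lemma Fobj_above_kink: "\<gamma> \<le> y \<Longrightarrow> Fobj \<alpha> k \<gamma> \<theta> y = (y - \<gamma>) powr \<alpha> + \<theta> * y powr \<alpha>"
  by (simp add: Fobj_def U_def)

lemma borel_measurable_Fobj [measurable]: "Fobj \<alpha> k \<gamma> \<theta> \<in> borel_measurable borel"
  unfolding Fobj_def[abs_def] U_def by measurable

lemma continuous_on_Fobj:
  assumes "0 < \<alpha>"
  shows "continuous_on {0..} (Fobj \<alpha> k \<gamma> \<theta>)"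
proof -
  have "continuous_on {0..} (\<lambda>y. (max (y - \<gamma>) 0) powr \<alpha> - k * (max (\<gamma> - y) 0) powr \<alpha>
          + \<theta> * (max y 0) powr \<alpha>)"
    using assms by (intro continuous_intros continuous_on_powr') auto
  moreover have "(max (y - \<gamma>) 0) powr \<alpha> - k * (max (\<gamma> - y) 0) powr \<alpha> + \<theta> * (max y 0) powr \<alpha>
      = Fobj \<alpha> k \<gamma> \<theta> y" if "y \<in> {0..}" for y
    using assms that by (cases "\<gamma> \<le> y") (auto simp: Fobj_def U_def max_def)
  ultimately show ?thesis by (rule continuous_on_eq)
qed

lemma DERIV_Fobj_below_kink:
  assumes "0 < s" "s < \<gamma>"
  shows "(Fobj \<alpha> k \<gamma> \<theta> has_real_derivative \<alpha> * (k * (\<gamma> - s) powr (\<alpha> - 1) + \<theta> * s powr (\<alpha> - 1)))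
           (at s)"
proof (rule has_field_derivative_transform_within_open[where S = "{0<..<\<gamma>}"])
  show "((\<lambda>s. \<theta> * s powr \<alpha> - k * (\<gamma> - s) powr \<alpha>) has_real_derivative
      \<alpha> * (k * (\<gamma> - s) powr (\<alpha> - 1) + \<theta> * s powr (\<alpha> - 1))) (at s)"
    using assms by (auto intro!: derivative_eq_intros simp: algebra_simps)
qed (use assms in \<open>auto simp: Fobj_below_kink\<close>)

lemma DERIV_Fobj_above_kink:
  assumes "0 < \<gamma>" "\<gamma> < s"
  shows "(Fobj \<alpha> k \<gamma> \<theta> has_real_derivative \<alpha> * ((s - \<gamma>) powr (\<alpha> - 1) + \<theta> * s powr (\<alpha> - 1))) (at s)"
proof (rule has_field_derivative_transform_within_open[where S = "{\<gamma><..}"])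
  show "((\<lambda>s. (s - \<gamma>) powr \<alpha> + \<theta> * s powr \<alpha>) has_real_derivative
      \<alpha> * ((s - \<gamma>) powr (\<alpha> - 1) + \<theta> * s powr (\<alpha> - 1))) (at s)"
    using assms by (auto intro!: derivative_eq_intros simp: algebra_simps)
qed (use assms in \<open>auto simp: Fobj_above_kink\<close>)

context
  fixes \<alpha> k \<gamma> :: real
  assumes exponent: "0 < \<alpha>" "\<alpha> < 1" and loss_aversion: "0 \<le> k" and reference: "0 < \<gamma>"
begin

lemma Fobj_le: "0 \<le> y \<Longrightarrow> Fobj \<alpha> k \<gamma> \<theta> y \<le> (1 + \<bar>\<theta>\<bar>) * y powr \<alpha>"
proof -
  assume "0 \<le> y"
  have "U \<alpha> k (y - \<gamma>) \<le> y powr \<alpha>"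
  proof (cases "\<gamma> \<le> y")
    case True
    then have "(y - \<gamma>) powr \<alpha> \<le> y powr \<alpha>"
      using reference exponent by (intro powr_mono2) auto
    with True show ?thesis by (simp add: U_def)
  next
    case False
    have "0 \<le> k * \<bar>y - \<gamma>\<bar> powr \<alpha>" using loss_aversion by simp
    with False show ?thesis by (simp add: U_def) (meson neg_le_0_iff_le order_trans powr_ge_zero)
  qed
  moreover have "\<theta> * y powr \<alpha> \<le> \<bar>\<theta>\<bar> * y powr \<alpha>" by (intro mult_right_mono) auto
  ultimately show ?thesis unfolding Fobj_def by (simp add: algebra_simps)
qed

lemma abs_Fobj_le: "0 \<le> y \<Longrightarrow> \<bar>Fobj \<alpha> k \<gamma> \<theta> y\<bar> \<le> k * \<gamma> powr \<alpha> + (1 + \<bar>\<theta>\<bar>) * y powr \<alpha>"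
proof -
  assume y: "0 \<le> y"
  have "- (k * \<gamma> powr \<alpha>) \<le> U \<alpha> k (y - \<gamma>)"
  proof (cases "\<gamma> \<le> y")
    case True
    have "0 \<le> k * \<gamma> powr \<alpha>" using loss_aversion by simp
    with True show ?thesis by (simp add: U_def) (meson neg_le_0_iff_le order_trans powr_ge_zero)
  next
    case False
    then have "k * \<bar>y - \<gamma>\<bar> powr \<alpha> \<le> k * \<gamma> powr \<alpha>"
      using y loss_aversion exponent by (intro mult_left_mono powr_mono2) auto
    with False show ?thesis by (simp add: U_def)
  qed
  moreover have "- (\<bar>\<theta>\<bar> * y powr \<alpha>) \<le> \<theta> * y powr \<alpha>"
    using mult_right_mono[of "- \<bar>\<theta>\<bar>" \<theta> "y powr \<alpha>"] by simp
  moreover have "0 \<le> k * \<gamma> powr \<alpha>" using loss_aversion by simp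
  moreover have "0 \<le> y powr \<alpha>" by simp
  ultimately show ?thesis using Fobj_le[OF y, of \<theta>] unfolding abs_le_iff Fobj_def by argo
qed

lemma lower_theta_powr:
  defines "m \<equiv> k powr (1 / (1 - \<alpha>))"
  shows "lower_theta \<alpha> k = - ((1 + m) powr (1 - \<alpha>))" and "k = m powr (1 - \<alpha>)"
  using exponent loss_aversion by (simp_all add: lower_theta_def m_def powr_powr)

lemma kink_point_altdef: "\<gamma> * (1 + k powr (- 1 / (1 - \<alpha>))) = \<gamma> + \<gamma> / k powr (1 / (1 - \<alpha>))"
  by (simp add: powr_minus[symmetric] minus_divide_left divide_inverse distrib_left)

lemma Fobj_lower_theta_le:
  assumes y: "0 \<le> y"
  shows "Fobj \<alpha> k \<gamma> (lower_theta \<alpha> k) y \<le> - (k * \<gamma> powr \<alpha>)"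
proof -
  define m where "m = k powr (1 / (1 - \<alpha>))"
  note m_eq = lower_theta_powr[folded m_def]
  have "0 \<le> m" by (simp add: m_def)
  show ?thesis
  proof (cases "y < \<gamma>")
    case True
    have "k * \<gamma> powr \<alpha> \<le> k * (\<gamma> - y) powr \<alpha> + k * y powr \<alpha>"
      using powr_add_le_add_powr[of \<alpha> "\<gamma> - y" y] exponent loss_aversion y True
      by (simp add: distrib_left[symmetric] mult_left_mono)
    moreover have "k * y powr \<alpha> \<le> (1 + m) powr (1 - \<alpha>) * y powr \<alpha>"
      using \<open>0 \<le> m\<close> exponent by (subst m_eq(2)) (intro mult_right_mono powr_mono2; simp)
    ultimately show ?thesis using True y by (simp add: Fobj_below_kink m_eq(1))
  next
    case False
    \<comment> \<open>Hoelder for the vectors \<open>(y - \<gamma>, \<gamma>)\<close> and \<open>(1, m)\<close>\<close>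
    have "(y - \<gamma>) powr \<alpha> + \<gamma> powr \<alpha> * k \<le> y powr \<alpha> * (1 + m) powr (1 - \<alpha>)"
      using Hoelder_two_terms(1)[of \<alpha> "y - \<gamma>" \<gamma> 1 m] exponent reference False \<open>0 \<le> m\<close>
      by (simp add: m_eq(2)[symmetric])
    with False show ?thesis by (simp add: Fobj_above_kink m_eq(1) algebra_simps)
  qed
qed

lemma Fobj_lower_theta_less:
  assumes k: "0 < k" and y: "0 < y" "y \<noteq> \<gamma> * (1 + k powr (- 1 / (1 - \<alpha>)))"
  shows "Fobj \<alpha> k \<gamma> (lower_theta \<alpha> k) y < - (k * \<gamma> powr \<alpha>)"
proof -
  define m where "m = k powr (1 / (1 - \<alpha>))"
  note m_eq = lower_theta_powr[folded m_def]
  have "0 < m" using k by (simp add: m_def)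
  show ?thesis
  proof (cases "y < \<gamma>")
    case True
    have "k * \<gamma> powr \<alpha> \<le> k * (\<gamma> - y) powr \<alpha> + k * y powr \<alpha>"
      using powr_add_le_add_powr[of \<alpha> "\<gamma> - y" y] exponent k y True
      by (simp add: distrib_left[symmetric] mult_left_mono)
    moreover have "k * y powr \<alpha> < (1 + m) powr (1 - \<alpha>) * y powr \<alpha>"
      using \<open>0 < m\<close> exponent y by (subst m_eq(2)) (intro mult_strict_right_mono powr_less_mono2; simp)
    moreover have "Fobj \<alpha> k \<gamma> (lower_theta \<alpha> k) y
        = - ((1 + m) powr (1 - \<alpha>)) * y powr \<alpha> - k * (\<gamma> - y) powr \<alpha>"
      using True y by (simp add: Fobj_below_kink m_eq(1))
    ultimately show ?thesis by linarith
  next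
    case False
    have "y \<noteq> \<gamma> + \<gamma> / m" using y(2) unfolding kink_point_altdef m_def .
    moreover have "y = \<gamma> + \<gamma> / m" if "(y - \<gamma>) * m = \<gamma> * 1"
      using that \<open>0 < m\<close> by (simp add: field_simps)
    ultimately have "(y - \<gamma>) * m \<noteq> \<gamma> * 1" by blast
    then have "(y - \<gamma>) powr \<alpha> + \<gamma> powr \<alpha> * k < y powr \<alpha> * (1 + m) powr (1 - \<alpha>)"
      using Hoelder_two_terms(2)[of \<alpha> "y - \<gamma>" \<gamma> 1 m] exponent reference False \<open>0 < m\<close>
      by (simp add: m_eq(2)[symmetric])
    with False show ?thesis by (simp add: Fobj_above_kink m_eq(1) algebra_simps)
  qed
qed

lemma Fobj_lower_theta_kink_point:
  assumes k: "0 < k"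
  shows "Fobj \<alpha> k \<gamma> (lower_theta \<alpha> k) (\<gamma> * (1 + k powr (- 1 / (1 - \<alpha>)))) = - (k * \<gamma> powr \<alpha>)"
proof -
  define m where "m = k powr (1 / (1 - \<alpha>))"
  note m_eq = lower_theta_powr[folded m_def]
  have m: "0 < m" using k by (simp add: m_def)
  have "Fobj \<alpha> k \<gamma> (lower_theta \<alpha> k) (\<gamma> + \<gamma> / m)
      = (\<gamma> / m) powr \<alpha> - (1 + m) powr (1 - \<alpha>) * ((\<gamma> / m) * (1 + m)) powr \<alpha>"
    using m reference by (subst Fobj_above_kink) (simp_all add: m_eq(1) distrib_left add.commute)
  also have "((\<gamma> / m) * (1 + m)) powr \<alpha> = (\<gamma> / m) powr \<alpha> * (1 + m) powr \<alpha>"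
    using m reference by (intro powr_mult)
  also have "(\<gamma> / m) powr \<alpha> - (1 + m) powr (1 - \<alpha>) * ((\<gamma> / m) powr \<alpha> * (1 + m) powr \<alpha>)
      = (\<gamma> / m) powr \<alpha> * (1 - (1 + m) powr (1 - \<alpha>) * (1 + m) powr \<alpha>)"
    by (simp add: algebra_simps)
  also have "(1 + m) powr (1 - \<alpha>) * (1 + m) powr \<alpha> = 1 + m"
    using m by (simp flip: powr_add)
  also have "(\<gamma> / m) powr \<alpha> * (1 - (1 + m)) = - (m powr (1 - \<alpha>) * \<gamma> powr \<alpha>)"
    using m reference by (simp add: powr_divide powr_diff)
  finally have "Fobj \<alpha> k \<gamma> (lower_theta \<alpha> k) (\<gamma> + \<gamma> / m) = - (k * \<gamma> powr \<alpha>)"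
    by (simp add: m_eq(2)[symmetric])
  then show ?thesis unfolding kink_point_altdef m_def .
qed

lemma Fobj_lower_theta_eq_iff:
  assumes k: "0 < k" and y: "0 \<le> y"
  shows "Fobj \<alpha> k \<gamma> (lower_theta \<alpha> k) y = - (k * \<gamma> powr \<alpha>) \<longleftrightarrow>
    y \<in> {0, \<gamma> * (1 + k powr (- 1 / (1 - \<alpha>)))}"
proof
  assume eq: "Fobj \<alpha> k \<gamma> (lower_theta \<alpha> k) y = - (k * \<gamma> powr \<alpha>)"
  show "y \<in> {0, \<gamma> * (1 + k powr (- 1 / (1 - \<alpha>)))}"
  proof (rule ccontr)
    assume "y \<notin> {0, \<gamma> * (1 + k powr (- 1 / (1 - \<alpha>)))}"
    with eq show False using Fobj_lower_theta_less[OF k, of y] y by simp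
  qed
qed (use Fobj_lower_theta_kink_point[OF k] Fobj_zero[OF exponent(1) reference] in auto)

lemma Fobj_unbounded:
  assumes "- 1 < \<theta>"
  shows "\<exists>u\<ge>0. c < Fobj \<alpha> k \<gamma> \<theta> u"
proof -
  define T where "T = (\<bar>c\<bar> + \<gamma> powr \<alpha> + 1) / (1 + \<theta>)"
  define u where "u = max \<gamma> (T powr (1 / \<alpha>))"
  have "0 < \<bar>c\<bar> + \<gamma> powr \<alpha> + 1" by (intro add_nonneg_pos add_nonneg_nonneg) auto
  then have T: "0 < T" using assms by (simp add: T_def)
  have u: "\<gamma> \<le> u" "0 \<le> u" using reference by (auto simp: u_def)
  have "T = (T powr (1 / \<alpha>)) powr \<alpha>" using T exponent by (simp add: powr_powr)
  also have "\<dots> \<le> u powr \<alpha>" using exponent by (intro powr_mono2) (auto simp: u_def)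
  finally have "(1 + \<theta>) * T \<le> (1 + \<theta>) * u powr \<alpha>" using assms by simp
  moreover have "(1 + \<theta>) * T = \<bar>c\<bar> + \<gamma> powr \<alpha> + 1" using assms by (simp add: T_def)
  moreover have "u powr \<alpha> \<le> (u - \<gamma>) powr \<alpha> + \<gamma> powr \<alpha>"
    using powr_add_le_add_powr[of \<alpha> "u - \<gamma>" \<gamma>] exponent reference u by simp
  ultimately have "c < (u - \<gamma>) powr \<alpha> + \<theta> * u powr \<alpha>" by (simp add: algebra_simps)
  then show ?thesis using u by (auto simp: Fobj_above_kink)
qed

lemma conj_argmax_Fobj_empty:
  assumes "- 1 < \<theta>"
  shows "conj_argmax (Fobj \<alpha> k \<gamma> \<theta>) 0 = {}"
proof (rule equals0I)
  fix y assume y: "y \<in> conj_argmax (Fobj \<alpha> k \<gamma> \<theta>) 0"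
  obtain u where "0 \<le> u" "Fobj \<alpha> k \<gamma> \<theta> y < Fobj \<alpha> k \<gamma> \<theta> u"
    using Fobj_unbounded[OF assms] by blast
  then show False using conj_argmax_le[OF y] by fastforce
qed

lemma continuous_on_Icc_Fobj: "0 \<le> a \<Longrightarrow> continuous_on {a..b} (Fobj \<alpha> k \<gamma> \<theta>)"
  using continuous_on_subset[OF continuous_on_Fobj[OF exponent(1)]] by auto

lemma conj_argmax_Fobj_not_below_kink:
  assumes \<theta>: "\<theta> < 0" and y: "y \<in> conj_argmax (Fobj \<alpha> k \<gamma> \<theta>) 0" "0 < y"
  shows "\<gamma> \<le> y"
proof (rule ccontr)
  \<comment> \<open>below the kink the derivative is strictly increasing, so a critical point is a minimum\<close>
  let ?F = "Fobj \<alpha> k \<gamma> \<theta>"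
  assume "\<not> \<gamma> \<le> y"
  define D where "D s = k * (\<gamma> - s) powr (\<alpha> - 1) + \<theta> * s powr (\<alpha> - 1)" for s
  have der: "(?F has_real_derivative \<alpha> * D s) (at s)" if "0 < s" "s < \<gamma>" for s
    using DERIV_Fobj_below_kink[OF that] unfolding D_def .
  have "\<alpha> * D y = 0"
    using conj_argmax_le[OF y(1)] \<open>\<not> \<gamma> \<le> y\<close> y(2)
    by (intro DERIV_local_max[OF der y(2)]) auto
  then have "D y = 0" using exponent by simp
  have "\<exists>d. (?F has_real_derivative d) (at s) \<and> d < 0" if "0 < s" "s < y" for s
  proof -
    have "(\<gamma> - s) powr (\<alpha> - 1) \<le> (\<gamma> - y) powr (\<alpha> - 1)"
      using that \<open>\<not> \<gamma> \<le> y\<close> exponent by (intro powr_mono2') auto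
    moreover have "y powr (\<alpha> - 1) < s powr (\<alpha> - 1)"
      using that exponent by (intro powr_less_mono2_neg) auto
    ultimately have "D s < D y"
      unfolding D_def using \<theta> loss_aversion by (intro add_le_less_mono mult_left_mono mult_strict_left_mono_neg)
    then have "\<alpha> * D s < 0" using \<open>D y = 0\<close> exponent by (simp add: mult_pos_neg)
    with der[of s] that \<open>\<not> \<gamma> \<le> y\<close> show ?thesis by auto
  qed
  then have "?F y < ?F 0" using DERIV_neg_imp_decreasing_open[OF y(2)] continuous_on_Icc_Fobj[of 0 y] by auto
  then show False using conj_argmax_le[OF y(1), of 0] by simp
qed

lemma kink_not_in_conj_argmax_Fobj:
  assumes \<theta>: "\<theta> < 0"
  shows "\<gamma> \<notin> conj_argmax (Fobj \<alpha> k \<gamma> \<theta>) 0"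
proof
  \<comment> \<open>just above the kink the derivative of \<open>(s - \<gamma>) powr \<alpha>\<close> is unbounded\<close>
  let ?F = "Fobj \<alpha> k \<gamma> \<theta>"
  assume max: "\<gamma> \<in> conj_argmax ?F 0"
  define \<delta> where "\<delta> = \<gamma> * (- \<theta>) powr (1 / (\<alpha> - 1))"
  have "0 < \<delta>" using reference \<theta> by (simp add: \<delta>_def)
  have "\<delta> powr (\<alpha> - 1) = \<gamma> powr (\<alpha> - 1) * (- \<theta>)"
    using reference \<theta> exponent by (simp add: \<delta>_def powr_mult powr_powr)
  then have \<delta>_powr: "\<delta> powr (\<alpha> - 1) = - (\<theta> * \<gamma> powr (\<alpha> - 1))" by (simp add: mult.commute)
  have deriv_pos: "\<exists>d. (?F has_real_derivative d) (at s) \<and> 0 < d" if "\<gamma> < s" "s < \<gamma> + \<delta>" for s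
  proof -
    have "- (\<theta> * \<gamma> powr (\<alpha> - 1)) < (s - \<gamma>) powr (\<alpha> - 1)"
      unfolding \<delta>_powr[symmetric] using that exponent by (intro powr_less_mono2_neg) auto
    moreover have "\<theta> * \<gamma> powr (\<alpha> - 1) < \<theta> * s powr (\<alpha> - 1)"
      using that exponent reference \<theta> by (intro mult_strict_left_mono_neg powr_less_mono2_neg) auto
    ultimately have "0 < (s - \<gamma>) powr (\<alpha> - 1) + \<theta> * s powr (\<alpha> - 1)" by linarith
    then have "0 < \<alpha> * ((s - \<gamma>) powr (\<alpha> - 1) + \<theta> * s powr (\<alpha> - 1))" using exponent by simp
    with DERIV_Fobj_above_kink[OF reference that(1)] show ?thesis by blast
  qed
  have "?F \<gamma> < ?F (\<gamma> + \<delta>)"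
    using \<open>0 < \<delta>\<close> reference
    by (intro DERIV_pos_imp_increasing_open[OF _ deriv_pos] continuous_on_Icc_Fobj) auto
  then show False using conj_argmax_le[OF max, of "\<gamma> + \<delta>"] \<open>0 < \<delta>\<close> reference by simp
qed

lemma conj_argmax_Fobj_first_order:
  assumes \<theta>: "\<theta> < 0" and y: "y \<in> conj_argmax (Fobj \<alpha> k \<gamma> \<theta>) 0" "0 < y"
  shows "\<gamma> < y" and "(1 - \<gamma> / y) powr (\<alpha> - 1) = - \<theta>"
proof -
  show "\<gamma> < y"
    using conj_argmax_Fobj_not_below_kink[OF assms] kink_not_in_conj_argmax_Fobj[OF \<theta>] y(1)
    by (metis order_le_less)
  then have "\<alpha> * ((y - \<gamma>) powr (\<alpha> - 1) + \<theta> * y powr (\<alpha> - 1)) = 0"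
    using conj_argmax_le[OF y(1)] reference
    by (intro DERIV_local_max[OF DERIV_Fobj_above_kink[where k = k, OF reference], of _ "y - \<gamma>"])
      (auto simp: abs_less_iff)
  then have "(y - \<gamma>) powr (\<alpha> - 1) + \<theta> * y powr (\<alpha> - 1) = 0" using exponent by simp
  then have "(y - \<gamma>) powr (\<alpha> - 1) = - (\<theta> * y powr (\<alpha> - 1))" by linarith
  then have "(y - \<gamma>) powr (\<alpha> - 1) / y powr (\<alpha> - 1) = - \<theta>" using y(2) by simp
  moreover have "(1 - \<gamma> / y) powr (\<alpha> - 1) = ((y - \<gamma>) / y) powr (\<alpha> - 1)"
    using y(2) by (simp add: diff_divide_distrib)
  moreover have "\<dots> = (y - \<gamma>) powr (\<alpha> - 1) / y powr (\<alpha> - 1)"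
    using \<open>\<gamma> < y\<close> reference by (intro powr_divide)
  ultimately show "(1 - \<gamma> / y) powr (\<alpha> - 1) = - \<theta>" by simp
qed

lemma conj_argmax_Fobj_positive_unique:
  assumes \<theta>: "\<theta> < 0"
    and a: "a \<in> conj_argmax (Fobj \<alpha> k \<gamma> \<theta>) 0" "0 < a" and b: "b \<in> conj_argmax (Fobj \<alpha> k \<gamma> \<theta>) 0" "0 < b"
  shows "a = b"
proof -
  note first_order = conj_argmax_Fobj_first_order[OF \<theta>]
  have "x = (x powr (\<alpha> - 1)) powr (1 / (\<alpha> - 1))" if "0 < x" for x :: real
    using that exponent by (simp add: powr_powr)
  moreover have "0 < 1 - \<gamma> / a" "0 < 1 - \<gamma> / b" using first_order(1) a b by simp_all
  moreover have "(1 - \<gamma> / a) powr (\<alpha> - 1) = (1 - \<gamma> / b) powr (\<alpha> - 1)"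
    using first_order(2) a b by simp
  ultimately have "1 - \<gamma> / a = 1 - \<gamma> / b" by metis
  then show "a = b" using reference by simp
qed

lemma conj_argmax_Fobj_zero_excludes_positive:
  assumes \<theta>: "\<theta> \<noteq> lower_theta \<alpha> k" "\<theta> \<le> - 1"
    and zero: "0 \<in> conj_argmax (Fobj \<alpha> k \<gamma> \<theta>) 0" and y: "y \<in> conj_argmax (Fobj \<alpha> k \<gamma> \<theta>) 0" "0 < y"
  shows False
proof (cases "\<theta> < lower_theta \<alpha> k")
  case True
  \<comment> \<open>below the critical level, every \<open>y > 0\<close> is strictly worse than \<open>0\<close>\<close>
  have "Fobj \<alpha> k \<gamma> \<theta> y = Fobj \<alpha> k \<gamma> (lower_theta \<alpha> k) y + (\<theta> - lower_theta \<alpha> k) * y powr \<alpha>"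
    by (rule Fobj_theta_shift)
  also have "\<dots> < Fobj \<alpha> k \<gamma> (lower_theta \<alpha> k) y" using True y(2) by (simp add: mult_neg_pos)
  also have "\<dots> \<le> Fobj \<alpha> k \<gamma> \<theta> 0" using Fobj_lower_theta_le y(2) exponent reference by (simp add: Fobj_zero)
  finally show False using conj_argmax_le[OF y(1), of 0] by simp
next
  case False
  \<comment> \<open>above it, the kink point of \<open>lower_theta\<close> is strictly better than \<open>0\<close>\<close>
  then have above: "lower_theta \<alpha> k < \<theta>" using \<theta>(1) by simp
  then have k: "0 < k" using \<theta>(2) loss_aversion by (cases "k = 0") (auto simp: lower_theta_def)
  define y' where "y' = \<gamma> * (1 + k powr (- 1 / (1 - \<alpha>)))"
  have "0 < y'" using reference by (simp add: y'_def add_pos_nonneg)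
  have "Fobj \<alpha> k \<gamma> \<theta> 0 = Fobj \<alpha> k \<gamma> (lower_theta \<alpha> k) y'"
    using Fobj_lower_theta_kink_point[OF k] exponent reference by (simp add: Fobj_zero y'_def)
  also have "\<dots> < Fobj \<alpha> k \<gamma> (lower_theta \<alpha> k) y' + (\<theta> - lower_theta \<alpha> k) * y' powr \<alpha>"
    using above \<open>0 < y'\<close> by simp
  also have "\<dots> = Fobj \<alpha> k \<gamma> \<theta> y'" by (rule Fobj_theta_shift[symmetric])
  finally show False using conj_argmax_le[OF zero, of y'] \<open>0 < y'\<close> by simp
qed

lemma conj_argmax_Fobj_unique:
  assumes \<theta>: "\<theta> \<noteq> lower_theta \<alpha> k"
    and y1: "y1 \<in> conj_argmax (Fobj \<alpha> k \<gamma> \<theta>) 0" and y2: "y2 \<in> conj_argmax (Fobj \<alpha> k \<gamma> \<theta>) 0"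
  shows "y1 = y2"
proof -
  have "\<theta> \<le> - 1" using conj_argmax_Fobj_empty y1 by force
  note zero_excludes_positive = conj_argmax_Fobj_zero_excludes_positive[OF \<theta> this]
  have nonneg: "0 \<le> y1" "0 \<le> y2" using y1 y2 by (simp_all add: conj_argmax_nonneg)
  show ?thesis
  proof (cases "y1 = 0 \<or> y2 = 0")
    case True
    then show ?thesis using zero_excludes_positive y1 y2 nonneg by (metis order_le_less)
  next
    case False
    then have "0 < y1" "0 < y2" using nonneg by simp_all
    moreover have "\<theta> < 0" using \<open>\<theta> \<le> - 1\<close> by simp
    ultimately show ?thesis using conj_argmax_Fobj_positive_unique y1 y2 by blast
  qed
qed

end

section \<open>The pricing kernel and admissible claims\<close>

lemma ext_expectation_integrable:
  fixes X :: "'a \<Rightarrow> real"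
  assumes X: "integrable M X"
  shows "ext_expectation M X = ereal (integral\<^sup>L M X)"
proof -
  have finite: "(\<integral>\<^sup>+x. ennreal (g x) \<partial>M) < \<infinity>" if "\<And>x. \<bar>g x\<bar> \<le> \<bar>X x\<bar>" for g
  proof -
    have "(\<integral>\<^sup>+x. ennreal (g x) \<partial>M) \<le> (\<integral>\<^sup>+x. ennreal (norm (X x)) \<partial>M)"
      using that by (intro nn_integral_mono) (auto intro: ennreal_leI order_trans[OF abs_ge_self])
    also have "\<dots> < \<infinity>" using X integrable_iff_bounded by blast
    finally show ?thesis .
  qed
  have "enn2ereal u = ereal (enn2real u)" if "u < \<infinity>" for u :: ennreal
    using that by (cases u rule: ennreal_cases) auto
  with finite[of X] finite[of "\<lambda>x. - X x"] show ?thesis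
    unfolding ext_expectation_def real_lebesgue_integral_def[OF X] by simp
qed

lemma distributed_AE_not_in_countable:
  assumes X: "distributed M lborel X f" and C: "countable C"
  shows "AE x in M. X x \<notin> C"
proof -
  have C_null: "C \<in> null_sets lborel" using C by (rule countable_imp_null_set_lborel)
  then have C_sets: "C \<in> sets lborel" by auto
  have "AE x in lborel. f x * indicator C x = 0"
    using AE_not_in[OF C_null] by eventually_elim simp
  then have "(\<integral>\<^sup>+x. f x * indicator C x \<partial>lborel) = 0"
    using C_sets X by (subst nn_integral_0_iff_AE) (auto dest: distributed_borel_measurable)
  then have "emeasure M (X -` C \<inter> space M) = 0"
    using distributed_emeasure[OF X C_sets] by simp
  moreover have "X -` C \<inter> space M \<in> sets M"
    using C_sets distributed_measurable[OF X] by (simp add: measurable_sets)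
  ultimately show ?thesis by (intro AE_I[of _ _ "X -` C \<inter> space M"]) auto
qed

lemma normal_density_mult_exp:
  fixes s a x :: real
  assumes "0 < s"
  shows "normal_density 0 s x * exp (a * x) = exp (a\<^sup>2 * s\<^sup>2 / 2) * normal_density (a * s\<^sup>2) s x"
proof -
  have "- (x - 0)\<^sup>2 / (2 * s\<^sup>2) + a * x = a\<^sup>2 * s\<^sup>2 / 2 + (- (x - a * s\<^sup>2)\<^sup>2 / (2 * s\<^sup>2))"
    using assms by (simp add: field_simps power2_eq_square)
  then show ?thesis unfolding normal_density_def by (simp add: mult_exp_exp)
qed

lemma integrable_exp_normal:
  assumes X: "distributed M lborel X (normal_density 0 s)" and s: "0 < s"
  shows "integrable M (\<lambda>x. exp (a * X x))"
proof -
  have "integrable lborel (\<lambda>x. normal_density 0 s x * exp (a * x))"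
    unfolding normal_density_mult_exp[OF s] using integrable_normal_density[OF s] by simp
  then show ?thesis using distributed_integrable[OF X, of "\<lambda>x. exp (a * x)"] by simp
qed

locale bs_market =
  fixes M :: "'a measure" and B :: "real \<Rightarrow> 'a \<Rightarrow> real" and \<mu> r \<sigma> \<tau> :: real
  assumes brownian: "brownian_motion M B"
    and mpr_nonzero: "mpr \<mu> r \<sigma> \<noteq> 0"
    and horizon: "0 < \<tau>"
begin

abbreviation Z :: "'a \<Rightarrow> real" where
  "Z \<equiv> pricing_kernel \<mu> r \<sigma> B \<tau>"

abbreviation Adm :: "('a \<Rightarrow> real) set" where
  "Adm \<equiv> admissible M B \<mu> r \<sigma> \<tau>"

sublocale prob_space M
  using brownian by (simp add: brownian_motion_def)

lemma borel_measurable_B [measurable]: "B t \<in> borel_measurable M"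
  using brownian by (simp add: brownian_motion_def)

lemma
  defines "G \<equiv> {B s -` A \<inter> space M | s A. 0 \<le> s \<and> s \<le> \<tau> \<and> A \<in> sets borel} \<union> null_sets M"
  shows space_filtration: "space (augmented_filtration M B \<tau>) = space M"
    and sets_filtration: "sets (augmented_filtration M B \<tau>) = sigma_sets (space M) G"
    and sets_filtration_subset: "sigma_sets (space M) G \<subseteq> sets M"
proof -
  have "G \<subseteq> sets M" unfolding G_def by (auto simp: null_sets_def)
  then show "sigma_sets (space M) G \<subseteq> sets M" using sigma_sets_le_sets_iff by blast
  have "G \<subseteq> Pow (space M)" using \<open>G \<subseteq> sets M\<close> sets.sets_into_space by blast
  then show "space (augmented_filtration M B \<tau>) = space M"
    and "sets (augmented_filtration M B \<tau>) = sigma_sets (space M) G"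
    unfolding augmented_filtration_def G_def[symmetric] by (simp_all add: space_measure_of sets_measure_of)
qed

lemma subalgebra_filtration: "subalgebra M (augmented_filtration M B \<tau>)"
  using space_filtration sets_filtration sets_filtration_subset by (simp add: subalgebra_def)

lemma measurable_filtration_imp_measurable:
  "X \<in> borel_measurable (augmented_filtration M B \<tau>) \<Longrightarrow> X \<in> borel_measurable M"
  using measurable_from_subalg[OF subalgebra_filtration] by blast

lemma B_horizon_measurable_filtration: "B \<tau> \<in> borel_measurable (augmented_filtration M B \<tau>)"
proof (rule measurableI)
  fix A :: "real set" assume "A \<in> sets borel"
  then have "B \<tau> -` A \<inter> space M
      \<in> {B s -` A \<inter> space M | s A. 0 \<le> s \<and> s \<le> \<tau> \<and> A \<in> sets borel} \<union> null_sets M"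
    using horizon by (intro UnI1 CollectI exI[of _ \<tau>] exI[of _ A]) auto
  then show "B \<tau> -` A \<inter> space (augmented_filtration M B \<tau>) \<in> sets (augmented_filtration M B \<tau>)"
    unfolding space_filtration sets_filtration by (rule sigma_sets.Basic)
qed simp

lemma Z_eq: "Z \<omega> = exp (- mpr \<mu> r \<sigma> * B \<tau> \<omega> - (r + (mpr \<mu> r \<sigma>)\<^sup>2 / 2) * \<tau>)"
  by (simp add: pricing_kernel_def)

lemma Z_pos: "0 < Z \<omega>"
  by (simp add: Z_eq)

lemma Z_measurable_filtration: "Z \<in> borel_measurable (augmented_filtration M B \<tau>)"
  using B_horizon_measurable_filtration unfolding Z_eq[abs_def] by measurable

lemma borel_measurable_Z [measurable]: "Z \<in> borel_measurable M"
  using measurable_filtration_imp_measurable[OF Z_measurable_filtration] .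

lemma AE_B_horizon_eq_increment: "AE \<omega> in M. B \<tau> \<omega> = B \<tau> \<omega> - B 0 \<omega>"
  using brownian by (auto simp: brownian_motion_def)

lemma distributed_increment: "distributed M lborel (\<lambda>\<omega>. B \<tau> \<omega> - B 0 \<omega>) (normal_density 0 (sqrt \<tau>))"
  using brownian horizon unfolding brownian_motion_def by force

lemma integrable_Z_powr: "integrable M (\<lambda>\<omega>. Z \<omega> powr q)"
proof -
  define c where "c = (r + (mpr \<mu> r \<sigma>)\<^sup>2 / 2) * \<tau>"
  have "integrable M (\<lambda>\<omega>. exp ((- q * mpr \<mu> r \<sigma>) * (B \<tau> \<omega> - B 0 \<omega>)))"
    using horizon by (intro integrable_exp_normal[OF distributed_increment]) simp
  then have "integrable M (\<lambda>\<omega>. exp ((- q * mpr \<mu> r \<sigma>) * B \<tau> \<omega>))"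
    by (rule integrable_cong_AE[THEN iffD1, rotated -1]) (use AE_B_horizon_eq_increment in auto)
  moreover have "Z \<omega> powr q = exp (- q * c) * exp ((- q * mpr \<mu> r \<sigma>) * B \<tau> \<omega>)" for \<omega>
    unfolding Z_eq c_def[symmetric] powr_def by (simp add: algebra_simps flip: exp_add)
  ultimately show ?thesis by simp
qed

lemma integrable_Z: "integrable M Z"
  using integrable_Z_powr[of 1] Z_pos by (simp add: less_imp_le)

lemma expectation_Z_pos: "0 < expectation Z"
proof -
  have nonneg: "AE \<omega> in M. 0 \<le> Z \<omega>" using Z_pos by (simp add: less_imp_le)
  have "expectation Z \<noteq> 0"
  proof
    assume "expectation Z = 0"
    then have "AE \<omega> in M. Z \<omega> = 0" using integral_nonneg_eq_0_iff_AE[OF integrable_Z nonneg] by simp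
    then show False using Z_pos by (simp add: less_le)
  qed
  then show ?thesis using integral_nonneg_AE[OF nonneg] by simp
qed

lemma AE_mult_Z_not_in_countable:
  assumes c: "0 < c" and C: "countable C"
  shows "AE \<omega> in M. c * Z \<omega> \<notin> C"
proof -
  \<comment> \<open>\<open>c * Z\<close> is an injective function of the Gaussian variable \<open>B \<tau>\<close>, which has no atoms\<close>
  define h where "h x = c * exp (- mpr \<mu> r \<sigma> * x - (r + (mpr \<mu> r \<sigma>)\<^sup>2 / 2) * \<tau>)" for x
  have "inj h"
  proof (rule injI)
    fix x y assume "h x = h y"
    then have "- mpr \<mu> r \<sigma> * x = - mpr \<mu> r \<sigma> * y" using c by (simp add: h_def)
    then show "x = y" using mpr_nonzero by simp
  qed
  then have "countable (UNIV \<inter> h -` C)" using C by (rule countable_image_inj_Int_vimage)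
  then have "AE \<omega> in M. B \<tau> \<omega> - B 0 \<omega> \<notin> h -` C"
    by (intro distributed_AE_not_in_countable[OF distributed_increment]) simp
  then show ?thesis
    using AE_B_horizon_eq_increment by eventually_elim (simp add: h_def Z_eq)
qed

lemma measurable_admissible [measurable_dest]: "Y \<in> Adm \<Longrightarrow> Y \<in> borel_measurable M"
  by (simp add: admissible_def measurable_filtration_imp_measurable)

lemma admissible_nonneg: "Y \<in> Adm \<Longrightarrow> \<omega> \<in> space M \<Longrightarrow> 0 \<le> Y \<omega>"
  by (simp add: admissible_def)

lemma nn_integral_Z_mult_eq:
  assumes "integrable M (\<lambda>\<omega>. Z \<omega> * Y \<omega>)" "\<And>\<omega>. \<omega> \<in> space M \<Longrightarrow> 0 \<le> Y \<omega>"
  shows "(\<integral>\<^sup>+\<omega>. ennreal (Z \<omega> * Y \<omega>) \<partial>M) = ennreal (expectation (\<lambda>\<omega>. Z \<omega> * Y \<omega>))"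
  using assms Z_pos by (intro nn_integral_eq_integral) (auto intro!: AE_I2 simp: less_imp_le)

lemma admissibleI:
  assumes "Y \<in> borel_measurable (augmented_filtration M B \<tau>)" "\<And>\<omega>. \<omega> \<in> space M \<Longrightarrow> 0 \<le> Y \<omega>"
    and "integrable M (\<lambda>\<omega>. Z \<omega> * Y \<omega>)" "expectation (\<lambda>\<omega>. Z \<omega> * Y \<omega>) \<le> 1"
  shows "Y \<in> Adm"
  using assms nn_integral_Z_mult_eq[of Y] by (simp add: admissible_def ennreal_le_1)

lemma
  assumes Y: "Y \<in> Adm"
  shows integrable_Z_mult_admissible: "integrable M (\<lambda>\<omega>. Z \<omega> * Y \<omega>)"
    and budget_admissible: "expectation (\<lambda>\<omega>. Z \<omega> * Y \<omega>) \<le> 1"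
proof -
  have [measurable]: "Y \<in> borel_measurable M" using Y by measurable
  have nonneg: "AE \<omega> in M. 0 \<le> Z \<omega> * Y \<omega>"
    using Z_pos admissible_nonneg[OF Y] by (intro AE_I2) (simp add: less_imp_le)
  have budget: "(\<integral>\<^sup>+\<omega>. ennreal (Z \<omega> * Y \<omega>) \<partial>M) \<le> 1"
    using Y by (simp add: admissible_def)
  then show int: "integrable M (\<lambda>\<omega>. Z \<omega> * Y \<omega>)"
    using nonneg by (intro integrableI_nonneg) (auto simp: top.not_eq_extremum le_less_trans)
  show "expectation (\<lambda>\<omega>. Z \<omega> * Y \<omega>) \<le> 1"
    using budget nn_integral_Z_mult_eq[OF int admissible_nonneg[OF Y]] by (simp add: ennreal_le_1)
qed

lemma integrable_powr_admissible:
  assumes Y: "Y \<in> Adm" and \<alpha>: "0 < \<alpha>" "\<alpha> < 1"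
  shows "integrable M (\<lambda>\<omega>. Y \<omega> powr \<alpha>)"
proof -
  \<comment> \<open>AM-GM splits \<open>Y powr \<alpha> = (Z Y) powr \<alpha> * (Z powr p) powr (1 - \<alpha>)\<close> into integrable parts\<close>
  define p where "p = - \<alpha> / (1 - \<alpha>)"
  have [measurable]: "Y \<in> borel_measurable M" using Y by measurable
  have "integrable M (\<lambda>\<omega>. \<alpha> * (Z \<omega> * Y \<omega>) + (1 - \<alpha>) * Z \<omega> powr p)"
    using integrable_Z_mult_admissible[OF Y] integrable_Z_powr[of p] by auto
  then show ?thesis
  proof (rule Bochner_Integration.integrable_bound)
    show "AE \<omega> in M. norm (Y \<omega> powr \<alpha>) \<le> norm (\<alpha> * (Z \<omega> * Y \<omega>) + (1 - \<alpha>) * Z \<omega> powr p)"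
    proof (rule AE_I2)
      fix \<omega> assume "\<omega> \<in> space M"
      then have Y0: "0 \<le> Y \<omega>" by (rule admissible_nonneg[OF Y])
      have "(Z \<omega> powr p) powr (1 - \<alpha>) = Z \<omega> powr (- \<alpha>)" using \<alpha> by (simp add: p_def powr_powr)
      then have "Y \<omega> powr \<alpha> = (Z \<omega> * Y \<omega>) powr \<alpha> * (Z \<omega> powr p) powr (1 - \<alpha>)"
        using Z_pos[of \<omega>] Y0 by (simp add: powr_mult powr_minus field_simps)
      also have "\<dots> \<le> \<alpha> * (Z \<omega> * Y \<omega>) + (1 - \<alpha>) * Z \<omega> powr p"
        using \<alpha> Z_pos[of \<omega>] Y0 by (intro weighted_AM_GM) auto
      finally show "norm (Y \<omega> powr \<alpha>) \<le> norm (\<alpha> * (Z \<omega> * Y \<omega>) + (1 - \<alpha>) * Z \<omega> powr p)"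
        by simp
    qed
  qed measurable
qed

end

section \<open>Lagrangian duality\<close>

locale portfolio_problem = bs_market +
  fixes \<alpha> k \<gamma> \<theta> :: real
  assumes alpha: "0 < \<alpha>" "\<alpha> < 1" and k_nonneg: "0 \<le> k" and gamma_pos: "0 < \<gamma>"
begin

abbreviation F :: "real \<Rightarrow> real" where
  "F \<equiv> Fobj \<alpha> k \<gamma> \<theta>"

sublocale powr_growth F \<alpha> "1 + \<bar>\<theta>\<bar>"
  using continuous_on_Fobj Fobj_le alpha k_nonneg gamma_pos by unfold_locales auto

lemma integrable_F_admissible:
  assumes Y: "Y \<in> Adm"
  shows "integrable M (\<lambda>\<omega>. F (Y \<omega>))"
proof -
  have [measurable]: "Y \<in> borel_measurable M" using Y by measurable
  have "integrable M (\<lambda>\<omega>. k * \<gamma> powr \<alpha> + (1 + \<bar>\<theta>\<bar>) * Y \<omega> powr \<alpha>)"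
    using integrable_powr_admissible[OF Y alpha] by auto
  then show ?thesis
  proof (rule Bochner_Integration.integrable_bound)
    show "AE \<omega> in M. norm (F (Y \<omega>)) \<le> norm (k * \<gamma> powr \<alpha> + (1 + \<bar>\<theta>\<bar>) * Y \<omega> powr \<alpha>)"
    proof (rule AE_I2)
      fix \<omega> assume "\<omega> \<in> space M"
      then have "\<bar>F (Y \<omega>)\<bar> \<le> k * \<gamma> powr \<alpha> + (1 + \<bar>\<theta>\<bar>) * Y \<omega> powr \<alpha>"
        using abs_Fobj_le alpha k_nonneg gamma_pos admissible_nonneg[OF Y] by blast
      then show "norm (F (Y \<omega>)) \<le> norm (k * \<gamma> powr \<alpha> + (1 + \<bar>\<theta>\<bar>) * Y \<omega> powr \<alpha>)" by simp
    qed
  qed measurable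
qed

lemma is_maximizer_iff:
  "is_maximizer M B \<mu> r \<sigma> \<tau> \<alpha> k \<gamma> \<theta> Y \<longleftrightarrow>
     Y \<in> Adm \<and> (\<forall>Y'\<in>Adm. expectation (\<lambda>\<omega>. F (Y' \<omega>)) \<le> expectation (\<lambda>\<omega>. F (Y \<omega>)))"
  unfolding is_maximizer_def
  by (auto simp: ext_expectation_integrable[OF integrable_F_admissible])

definition budget :: "real \<Rightarrow> real" where
  "budget l = expectation (\<lambda>\<omega>. Z \<omega> * sel (l * Z \<omega>))"

lemma sel_Z_measurable_filtration:
  "(\<lambda>\<omega>. sel (l * Z \<omega>)) \<in> borel_measurable (augmented_filtration M B \<tau>)"
  using Z_measurable_filtration by measurable

lemma integrable_argmax_bound_Z: "0 < l \<Longrightarrow> integrable M (\<lambda>\<omega>. argmax_bound (l * Z \<omega>))"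
proof -
  assume l: "0 < l"
  define p where "p = - \<alpha> / (1 - \<alpha>)"
  have "argmax_bound (l * Z \<omega>)
      = 2 * (- F 0) + 2 * (1 + \<bar>\<theta>\<bar>) powr (1 / (1 - \<alpha>)) * (l / 2) powr p * Z \<omega> powr p" for \<omega>
    using l Z_pos[of \<omega>] by (simp add: argmax_bound_def p_def powr_mult[symmetric] mult.assoc)
  then show ?thesis using integrable_Z_powr[of p] by simp
qed

lemma Z_mult_sel_le: "0 < l \<Longrightarrow> Z \<omega> * sel (l * Z \<omega>) \<le> argmax_bound (l * Z \<omega>) / l"
  using sel_mult_le[of "l * Z \<omega>"] Z_pos[of \<omega>] by (simp add: field_simps)

lemma Z_mult_sel_nonneg: "0 \<le> Z \<omega> * sel z"
  using Z_pos[of \<omega>] sel_nonneg[of z] by simp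

lemma integrable_budget: "0 < l \<Longrightarrow> integrable M (\<lambda>\<omega>. Z \<omega> * sel (l * Z \<omega>))"
proof -
  assume l: "0 < l"
  then have "integrable M (\<lambda>\<omega>. argmax_bound (l * Z \<omega>) / l)" using integrable_argmax_bound_Z by simp
  then show ?thesis
  proof (rule Bochner_Integration.integrable_bound)
    show "AE \<omega> in M. norm (Z \<omega> * sel (l * Z \<omega>)) \<le> norm (argmax_bound (l * Z \<omega>) / l)"
      using Z_mult_sel_le[OF l] Z_mult_sel_nonneg by (intro AE_I2) (metis abs_of_nonneg order_trans real_norm_def abs_ge_self)
  qed measurable
qed

lemma budget_antimono:
  assumes "0 < l1" "l1 \<le> l2"
  shows "budget l2 \<le> budget l1"
  unfolding budget_def
proof (intro integral_mono integrable_budget)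
  fix \<omega> show "Z \<omega> * sel (l2 * Z \<omega>) \<le> Z \<omega> * sel (l1 * Z \<omega>)"
    using assms Z_pos[of \<omega>] by (intro mult_left_mono sel_antimono) auto
qed (use assms in auto)

lemma continuous_on_budget:
  assumes c: "0 < c"
  shows "continuous_on {c..} budget"
proof (rule continuous_on_sequentiallyI)
  fix u :: "nat \<Rightarrow> real" and l assume u: "\<forall>n. u n \<in> {c..}" and l: "l \<in> {c..}" and lim: "u \<longlonglongrightarrow> l"
  have "0 < l" using c l by simp
  show "(\<lambda>n. budget (u n)) \<longlonglongrightarrow> budget l"
    unfolding budget_def
  proof (rule integral_dominated_convergence[where w = "\<lambda>\<omega>. Z \<omega> * sel (c * Z \<omega>)"])
    show "integrable M (\<lambda>\<omega>. Z \<omega> * sel (c * Z \<omega>))" using c by (rule integrable_budget)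
    \<comment> \<open>almost surely \<open>l Z\<close> avoids the countably many jumps of the selection\<close>
    have "AE \<omega> in M. l * Z \<omega> \<notin> conj_argmax_jumps F"
      using \<open>0 < l\<close> countable_conj_argmax_jumps by (rule AE_mult_Z_not_in_countable)
    then show "AE \<omega> in M. (\<lambda>n. Z \<omega> * sel (u n * Z \<omega>)) \<longlonglongrightarrow> Z \<omega> * sel (l * Z \<omega>)"
    proof eventually_elim
      fix \<omega> assume "l * Z \<omega> \<notin> conj_argmax_jumps F"
      then have "isCont sel (l * Z \<omega>)" using \<open>0 < l\<close> Z_pos[of \<omega>] by (intro isCont_sel) auto
      then show "(\<lambda>n. Z \<omega> * sel (u n * Z \<omega>)) \<longlonglongrightarrow> Z \<omega> * sel (l * Z \<omega>)"
        using lim by (intro tendsto_mult_left isCont_tendsto_compose[where g = sel] tendsto_mult_right)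
    qed
    fix n
    have "Z \<omega> * sel (u n * Z \<omega>) \<le> Z \<omega> * sel (c * Z \<omega>)" for \<omega>
      using c u Z_pos[of \<omega>] by (intro mult_left_mono sel_antimono) auto
    then show "AE \<omega> in M. norm (Z \<omega> * sel (u n * Z \<omega>)) \<le> Z \<omega> * sel (c * Z \<omega>)"
      using Z_mult_sel_nonneg by (intro AE_I2) simp
  qed measurable
qed

lemma budget_eventually_less_1: "\<exists>L>0. budget L < 1"
proof -
  define I where "I = expectation (\<lambda>\<omega>. argmax_bound (Z \<omega>))"
  define L where "L = max 1 (I + 1)"
  have "0 < L" "1 \<le> L" by (simp_all add: L_def)
  have "budget L \<le> expectation (\<lambda>\<omega>. argmax_bound (Z \<omega>) / L)"
    unfolding budget_def
  proof (intro integral_mono integrable_budget)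
    fix \<omega>
    have "argmax_bound (L * Z \<omega>) \<le> argmax_bound (Z \<omega>)"
      using \<open>1 \<le> L\<close> Z_pos[of \<omega>] by (intro argmax_bound_antimono) auto
    then show "Z \<omega> * sel (L * Z \<omega>) \<le> argmax_bound (Z \<omega>) / L"
      using Z_mult_sel_le[OF \<open>0 < L\<close>, of \<omega>] \<open>0 < L\<close> by (simp add: divide_right_mono order_trans)
  qed (use integrable_argmax_bound_Z[of 1] \<open>0 < L\<close> in auto)
  also have "\<dots> = I / L" by (simp add: I_def)
  also have "\<dots> < 1" using \<open>0 < L\<close> by (simp add: L_def divide_less_eq)
  finally show ?thesis using \<open>0 < L\<close> by blast
qed

lemma exists_budget_eq_1:
  assumes l0: "0 < l0" "1 \<le> budget l0"
  shows "\<exists>l>0. budget l = 1"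
proof -
  obtain L where L: "0 < L" "budget L < 1" using budget_eventually_less_1 by blast
  define L' where "L' = max l0 L"
  have "budget L' \<le> budget L" using L by (intro budget_antimono) (auto simp: L'_def)
  moreover have "continuous_on {l0..L'} budget"
    using continuous_on_budget[OF l0(1)] by (rule continuous_on_subset) auto
  ultimately obtain l where "l0 \<le> l" "budget l = 1"
    using IVT2'[of budget L' 1 l0] L l0 by (force simp: L'_def)
  then show ?thesis using l0 by (intro exI[of _ l]) auto
qed

lemma tendsto_expectation_Z_truncated:
  "(\<lambda>n. expectation (\<lambda>\<omega>. Z \<omega> * indicator {..real n} (Z \<omega>))) \<longlonglongrightarrow> expectation Z"
proof (rule integral_dominated_convergence[where w = Z])
  show "AE \<omega> in M. (\<lambda>n. Z \<omega> * indicator {..real n} (Z \<omega>)) \<longlonglongrightarrow> Z \<omega>"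
  proof (rule AE_I2)
    fix \<omega>
    obtain N :: nat where "Z \<omega> \<le> real N" using real_arch_simple by blast
    then have "\<forall>\<^sub>F n in sequentially. Z \<omega> * indicator {..real n} (Z \<omega>) = Z \<omega>"
      unfolding eventually_sequentially by (intro exI[of _ N]) (auto simp: indicator_def)
    then show "(\<lambda>n. Z \<omega> * indicator {..real n} (Z \<omega>)) \<longlonglongrightarrow> Z \<omega>" by (rule tendsto_eventually)
  qed
  show "AE \<omega> in M. norm (Z \<omega> * indicator {..real n} (Z \<omega>)) \<le> Z \<omega>" for n
    using Z_pos by (intro AE_I2) (simp add: indicator_def abs_mult less_imp_le)
qed (simp_all add: integrable_Z)

lemma sel_mult_expectation_Z_le:
  assumes small: "\<And>l. 0 < l \<Longrightarrow> budget l < 1" and z: "0 < z"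
  shows "sel z * expectation Z \<le> 1"
proof -
  \<comment> \<open>on \<open>{Z \<le> n}\<close> the demand at multiplier \<open>z / n\<close> is at least \<open>sel z\<close>\<close>
  have "sel z * expectation (\<lambda>\<omega>. Z \<omega> * indicator {..real (Suc n)} (Z \<omega>)) \<le> 1" for n
  proof -
    define l where "l = z / real (Suc n)"
    have "0 < l" using z by (simp add: l_def)
    have "sel z * expectation (\<lambda>\<omega>. Z \<omega> * indicator {..real (Suc n)} (Z \<omega>))
        = expectation (\<lambda>\<omega>. sel z * (Z \<omega> * indicator {..real (Suc n)} (Z \<omega>)))" by simp
    also have "\<dots> \<le> budget l"
      unfolding budget_def
    proof (intro integral_mono integrable_budget \<open>0 < l\<close>)
      have "integrable M (\<lambda>\<omega>. Z \<omega> * indicator {..real (Suc n)} (Z \<omega>))"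
      proof (rule Bochner_Integration.integrable_bound[OF integrable_Z])
        show "AE \<omega> in M. norm (Z \<omega> * indicator {..real (Suc n)} (Z \<omega>)) \<le> norm (Z \<omega>)"
          by (intro AE_I2) (simp add: indicator_def abs_mult)
      qed measurable
      then show "integrable M (\<lambda>\<omega>. sel z * (Z \<omega> * indicator {..real (Suc n)} (Z \<omega>)))" by simp
      fix \<omega>
      show "sel z * (Z \<omega> * indicator {..real (Suc n)} (Z \<omega>)) \<le> Z \<omega> * sel (l * Z \<omega>)"
      proof (cases "Z \<omega> \<le> real (Suc n)")
        case True
        then have "z * Z \<omega> \<le> z * real (Suc n)" using z by (intro mult_left_mono) auto
        then have "l * Z \<omega> \<le> z" by (simp add: l_def field_simps)
        then have "sel z \<le> sel (l * Z \<omega>)" using \<open>0 < l\<close> Z_pos[of \<omega>] by (intro sel_antimono) auto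
        with True show ?thesis using Z_pos[of \<omega>] by (simp add: mult.commute mult_left_mono)
      qed (simp add: Z_mult_sel_nonneg)
    qed
    also have "\<dots> < 1" using small[OF \<open>0 < l\<close>] .
    finally show ?thesis by simp
  qed
  moreover have "(\<lambda>n. sel z * expectation (\<lambda>\<omega>. Z \<omega> * indicator {..real (Suc n)} (Z \<omega>)))
      \<longlonglongrightarrow> sel z * expectation Z"
    using LIMSEQ_Suc[OF tendsto_expectation_Z_truncated] by (intro tendsto_mult_left)
  ultimately show ?thesis by (intro LIMSEQ_le_const2) auto
qed

lemma exists_conj_argmax_zero:
  assumes small: "\<And>l. 0 < l \<Longrightarrow> budget l < 1"
  shows "\<exists>L\<in>conj_argmax F 0. L * expectation Z \<le> 1"
proof -
  have bounded: "sel x \<le> 1 / expectation Z" if "0 < x" for x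
    using sel_mult_expectation_Z_le[OF small that] expectation_Z_pos by (simp add: field_simps)
  then obtain L where L: "L \<in> conj_argmax F 0" and lim: "(sel \<longlongrightarrow> L) (at_right 0)"
    using sel_tendsto_at_right[of 0] by auto
  have "L \<le> 1 / expectation Z"
    using eventually_at_right_less[of 0] bounded
    by (intro tendsto_upperbound[OF lim _ trivial_limit_at_right_real]) (auto elim: eventually_mono)
  then show ?thesis using L expectation_Z_pos by (auto simp: field_simps)
qed

lemma exists_dual_optimizer:
  "\<exists>l\<ge>0. \<exists>Y\<in>Adm. (\<forall>\<omega>\<in>space M. Y \<omega> \<in> conj_argmax F (l * Z \<omega>)) \<and>
     (l = 0 \<or> expectation (\<lambda>\<omega>. Z \<omega> * Y \<omega>) = 1)"
proof (cases "\<exists>l0>0. 1 \<le> budget l0")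
  case True
  then obtain l where l: "0 < l" "budget l = 1" using exists_budget_eq_1 by blast
  have "(\<lambda>\<omega>. sel (l * Z \<omega>)) \<in> Adm"
    using sel_Z_measurable_filtration sel_nonneg integrable_budget[OF l(1)] l(2)
    by (intro admissibleI) (auto simp: budget_def)
  moreover have "sel (l * Z \<omega>) \<in> conj_argmax F (l * Z \<omega>)" for \<omega>
    using l(1) Z_pos[of \<omega>] by (intro sel_in) simp
  ultimately show ?thesis
    using l unfolding budget_def by (intro exI[of _ l] conjI bexI[of _ "\<lambda>\<omega>. sel (l * Z \<omega>)"]) auto
next
  case False
  then obtain L where L: "L \<in> conj_argmax F 0" "L * expectation Z \<le> 1"
    using exists_conj_argmax_zero by force
  have "(\<lambda>\<omega>. L) \<in> Adm"
    using L conj_argmax_nonneg[OF L(1)] integrable_Z by (intro admissibleI) (auto simp: mult.commute)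
  with L(1) show ?thesis by (intro exI[of _ 0]) auto
qed

lemma maximizer_AE_in_conj_argmax:
  assumes l: "0 \<le> l" and Yl: "Yl \<in> Adm" "\<forall>\<omega>\<in>space M. Yl \<omega> \<in> conj_argmax F (l * Z \<omega>)"
    and slack: "l = 0 \<or> expectation (\<lambda>\<omega>. Z \<omega> * Yl \<omega>) = 1"
    and max: "is_maximizer M B \<mu> r \<sigma> \<tau> \<alpha> k \<gamma> \<theta> Y"
  shows "AE \<omega> in M. Y \<omega> \<in> conj_argmax F (l * Z \<omega>)"
proof -
  \<comment> \<open>the Lagrangian gap \<open>D\<close> is pointwise nonnegative, but has nonpositive expectation\<close>
  have Y: "Y \<in> Adm" and opt: "expectation (\<lambda>\<omega>. F (Yl \<omega>)) \<le> expectation (\<lambda>\<omega>. F (Y \<omega>))"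
    using max Yl(1) by (auto simp: is_maximizer_iff)
  define D where "D \<omega> = (F (Yl \<omega>) - l * Z \<omega> * Yl \<omega>) - (F (Y \<omega>) - l * Z \<omega> * Y \<omega>)" for \<omega>
  have D_nonneg: "0 \<le> D \<omega>" if "\<omega> \<in> space M" for \<omega>
    using conj_argmax_le[of "Yl \<omega>" F "l * Z \<omega>" "Y \<omega>"] Yl(2) admissible_nonneg[OF Y] that
    by (simp add: D_def)
  have int: "integrable M D"
    unfolding D_def using integrable_F_admissible[OF Y] integrable_F_admissible[OF Yl(1)]
      integrable_Z_mult_admissible[OF Y] integrable_Z_mult_admissible[OF Yl(1)]
    by (simp add: mult.assoc)
  have "expectation D = (expectation (\<lambda>\<omega>. F (Yl \<omega>)) - expectation (\<lambda>\<omega>. F (Y \<omega>)))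
      + l * (expectation (\<lambda>\<omega>. Z \<omega> * Y \<omega>) - expectation (\<lambda>\<omega>. Z \<omega> * Yl \<omega>))"
    unfolding D_def using integrable_F_admissible[OF Y] integrable_F_admissible[OF Yl(1)]
      integrable_Z_mult_admissible[OF Y] integrable_Z_mult_admissible[OF Yl(1)]
    by (simp add: mult.assoc algebra_simps)
  also have "\<dots> \<le> 0"
  proof -
    have "l * (expectation (\<lambda>\<omega>. Z \<omega> * Y \<omega>) - expectation (\<lambda>\<omega>. Z \<omega> * Yl \<omega>)) \<le> 0"
      using slack budget_admissible[OF Y] l by (cases "l = 0") (auto intro: mult_nonneg_nonpos)
    then show ?thesis using opt by linarith
  qed
  moreover have D_AE_nonneg: "AE \<omega> in M. 0 \<le> D \<omega>" using D_nonneg by (rule AE_I2)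
  ultimately have "expectation D = 0" using integral_nonneg_AE[OF D_AE_nonneg] by simp
  then have "AE \<omega> in M. D \<omega> = 0" using integral_nonneg_eq_0_iff_AE[OF int D_AE_nonneg] by simp
  then show ?thesis
  proof (rule AE_mp, intro AE_I2 impI)
    fix \<omega> assume \<omega>: "\<omega> \<in> space M" and "D \<omega> = 0"
    then have "F (Y \<omega>) - l * Z \<omega> * Y \<omega> = F (Yl \<omega>) - l * Z \<omega> * Yl \<omega>" by (simp add: D_def)
    then show "Y \<omega> \<in> conj_argmax F (l * Z \<omega>)"
      using Yl(2) \<omega> admissible_nonneg[OF Y \<omega>] by (simp add: conj_argmax_def)
  qed
qed

lemma maximizer_unique:
  assumes \<theta>: "\<theta> \<noteq> lower_theta \<alpha> k"
    and max1: "is_maximizer M B \<mu> r \<sigma> \<tau> \<alpha> k \<gamma> \<theta> Y1" and max2: "is_maximizer M B \<mu> r \<sigma> \<tau> \<alpha> k \<gamma> \<theta> Y2"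
  shows "AE \<omega> in M. Y1 \<omega> = Y2 \<omega>"
proof -
  obtain l Yl where l: "0 \<le> l" and Yl: "Yl \<in> Adm" "\<forall>\<omega>\<in>space M. Yl \<omega> \<in> conj_argmax F (l * Z \<omega>)"
    and slack: "l = 0 \<or> expectation (\<lambda>\<omega>. Z \<omega> * Yl \<omega>) = 1"
    using exists_dual_optimizer by blast
  have AE_in: "AE \<omega> in M. Y1 \<omega> \<in> conj_argmax F (l * Z \<omega>) \<and> Y2 \<omega> \<in> conj_argmax F (l * Z \<omega>)"
    using maximizer_AE_in_conj_argmax[OF l Yl slack max1] maximizer_AE_in_conj_argmax[OF l Yl slack max2]
    by eventually_elim simp
  show ?thesis
  proof (cases "l = 0")
    case True
    from AE_in show ?thesis
      by eventually_elim (use True in \<open>auto intro: conj_argmax_Fobj_unique[OF alpha k_nonneg gamma_pos \<theta>]\<close>)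
  next
    case False
    then have "0 < l" using l by simp
    have "AE \<omega> in M. l * Z \<omega> \<notin> conj_argmax_jumps F"
      using \<open>0 < l\<close> countable_conj_argmax_jumps by (rule AE_mult_Z_not_in_countable)
    with AE_in show ?thesis
      by eventually_elim (use \<open>0 < l\<close> Z_pos in \<open>auto intro: conj_argmax_unique\<close>)
  qed
qed

lemma maximizer_lower_theta_iff:
  assumes k: "0 < k" and \<theta>: "\<theta> = lower_theta \<alpha> k" and Y: "Y \<in> Adm"
  shows "is_maximizer M B \<mu> r \<sigma> \<tau> \<alpha> k \<gamma> \<theta> Y \<longleftrightarrow>
    (AE \<omega> in M. Y \<omega> \<in> {0, \<gamma> * (1 + k powr (- 1 / (1 - \<alpha>)))})"
proof -
  define c where "c = - (k * \<gamma> powr \<alpha>)"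
  define y' where "y' = \<gamma> * (1 + k powr (- 1 / (1 - \<alpha>)))"
  have F_le: "F y \<le> c" if "0 \<le> y" for y
    unfolding c_def \<theta> using Fobj_lower_theta_le alpha k_nonneg gamma_pos that .
  have F_eq: "F y = c \<longleftrightarrow> y \<in> {0, y'}" if "0 \<le> y" for y
    unfolding c_def \<theta> y'_def using Fobj_lower_theta_eq_iff alpha k_nonneg gamma_pos k that .
  have E_le: "expectation (\<lambda>\<omega>. F (Y' \<omega>)) \<le> c" if "Y' \<in> Adm" for Y'
    using integral_mono[OF integrable_F_admissible[OF that], of "\<lambda>_. c"] F_le admissible_nonneg[OF that]
    by (simp add: prob_space)
  have gap_int: "integrable M (\<lambda>\<omega>. c - F (Y \<omega>))" using integrable_F_admissible[OF Y] by simp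
  have gap_nonneg: "AE \<omega> in M. 0 \<le> c - F (Y \<omega>)"
    using F_le admissible_nonneg[OF Y] by (intro AE_I2) simp
  have "is_maximizer M B \<mu> r \<sigma> \<tau> \<alpha> k \<gamma> \<theta> Y \<longleftrightarrow> expectation (\<lambda>\<omega>. F (Y \<omega>)) = c"
  proof
    assume "is_maximizer M B \<mu> r \<sigma> \<tau> \<alpha> k \<gamma> \<theta> Y"
    moreover have "(\<lambda>_. 0) \<in> Adm" by (intro admissibleI) auto
    ultimately have "expectation (\<lambda>_. F 0) \<le> expectation (\<lambda>\<omega>. F (Y \<omega>))"
      by (auto simp: is_maximizer_iff)
    moreover have "F 0 = c" using F_eq[of 0] by simp
    ultimately show "expectation (\<lambda>\<omega>. F (Y \<omega>)) = c" using E_le[OF Y] by (simp add: prob_space)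
  qed (use Y E_le in \<open>simp add: is_maximizer_iff\<close>)
  also have "\<dots> \<longleftrightarrow> expectation (\<lambda>\<omega>. c - F (Y \<omega>)) = 0"
    using integrable_F_admissible[OF Y] by (auto simp: prob_space)
  also have "\<dots> \<longleftrightarrow> (AE \<omega> in M. c - F (Y \<omega>) = 0)"
    by (rule integral_nonneg_eq_0_iff_AE[OF gap_int gap_nonneg])
  also have "\<dots> \<longleftrightarrow> (AE \<omega> in M. Y \<omega> \<in> {0, y'})"
    using F_eq admissible_nonneg[OF Y] by (intro AE_cong) auto
  finally show ?thesis unfolding y'_def .
qed

end

theorem proposition4p3:
  fixes M :: "'a measure" and B :: "real \<Rightarrow> 'a \<Rightarrow> real"
    and \<mu> r \<sigma> \<tau> \<alpha> k \<gamma> \<theta> :: real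
  assumes "complete_measure M"
    and "brownian_motion M B"
    and "\<sigma> > 0" and "mpr \<mu> r \<sigma> \<noteq> 0"
    and "\<tau> > 0" and "0 < \<alpha>" and "\<alpha> < 1" and "k \<ge> 0" and "\<gamma> > 0"
  shows "(\<theta> \<noteq> lower_theta \<alpha> k \<longrightarrow>
            (\<forall>Y1 Y2. is_maximizer M B \<mu> r \<sigma> \<tau> \<alpha> k \<gamma> \<theta> Y1 \<and>
                     is_maximizer M B \<mu> r \<sigma> \<tau> \<alpha> k \<gamma> \<theta> Y2 \<longrightarrow>
                     measure M {\<omega> \<in> space M. Y1 \<omega> = Y2 \<omega>} = 1)) \<and>
         (\<theta> = lower_theta \<alpha> k \<and> k > 0 \<longrightarrow>
            (\<forall>Y \<in> admissible M B \<mu> r \<sigma> \<tau>.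
               is_maximizer M B \<mu> r \<sigma> \<tau> \<alpha> k \<gamma> \<theta> Y \<longleftrightarrow>
               measure M {\<omega> \<in> space M. Y \<omega> \<in> {0, \<gamma> * (1 + k powr (- 1 / (1 - \<alpha>)))}} = 1))"
proof -
  interpret portfolio_problem M B \<mu> r \<sigma> \<tau> \<alpha> k \<gamma> \<theta>
    using assms by unfold_locales auto
  show ?thesis
  proof (intro conjI impI allI ballI)
    fix Y1 Y2
    assume \<theta>: "\<theta> \<noteq> lower_theta \<alpha> k"
      and max: "is_maximizer M B \<mu> r \<sigma> \<tau> \<alpha> k \<gamma> \<theta> Y1 \<and> is_maximizer M B \<mu> r \<sigma> \<tau> \<alpha> k \<gamma> \<theta> Y2"
    then have "Y1 \<in> Adm" "Y2 \<in> Adm" by (simp_all add: is_maximizer_def)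
    then have [measurable]: "Y1 \<in> borel_measurable M" "Y2 \<in> borel_measurable M" by measurable
    show "measure M {\<omega> \<in> space M. Y1 \<omega> = Y2 \<omega>} = 1"
      using maximizer_unique[OF \<theta>] max by (subst prob_Collect_eq_1) auto
  next
    fix Y assume \<theta>: "\<theta> = lower_theta \<alpha> k \<and> 0 < k" and Y: "Y \<in> Adm"
    then have [measurable]: "Y \<in> borel_measurable M" by measurable
    show "is_maximizer M B \<mu> r \<sigma> \<tau> \<alpha> k \<gamma> \<theta> Y \<longleftrightarrow>
        measure M {\<omega> \<in> space M. Y \<omega> \<in> {0, \<gamma> * (1 + k powr (- 1 / (1 - \<alpha>)))}} = 1"
      using maximizer_lower_theta_iff \<theta> Y by (subst prob_Collect_eq_1) auto
  qed
qed

end
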